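(* For any cyclic CFSM protocol $\mathbf P$ with communication graph $(N,E)$ the following four conditions are equivalent: (a) $\mathbf P$ has the recognizable channel property; (b) $\mathbf P$ has the rational channel property; (c) for every $\beta\in E$ and every composite state $S$, the set $Q_\beta(S)=\{x_\beta\in M_\beta^*: (x_\xi:\xi\in E)\in\mathbf L(S)\text{ and } x_\xi=\lambda \text{ for } \xi\neq\beta\}$ is regular; (d) there exists $\beta\in E$ such that $Q_\beta(S)$ is regular for every composite state $S$.
   Context: A CFSM protocol $\mathbf P$ has a finite directed communication graph $G=(N,E)$ (edge $\xi$ has tail $-\xi$, head $+\xi$), pairwise disjoint finite message sets $M_\xi$ ($\xi\in E$), and for each $j\in N$ a finite state machine $F_j=(K_j,\Sigma_j,T_j,h_j)$: finite state set $K_j$, initial state $h_j$, alphabet $\Sigma_j=\{+b: b\in M_\xi,\ j=+\xi\}\cup\{-b: b\in M_\xi,\ j=-\xi\}$, transitions $T_j\subseteq K_j\times\Sigma_j\times K_j$ ($+b$ = receive, $-b$ = send). A composite state is $S=(p_j:j\in N)$, $p_j\in K_j$; a channel content is $C=(x_\xi:\xi\in E)$, $x_\xi\in M_\xi^*$; global states are pairs $(S,C)$; $C^0$ has all components equal to the empty word $\lambda$; the initial global state is $(S^0,C^0)$, $S^0=(h_j:j\in N)$. A step: some machine $F_i$ takes $p_i\xrightarrow{-b}q_i$ with $b\in M_\beta$, $i=-\beta$, appending $b$ to the end of $x_\beta$; or takes $p_i\xrightarrow{+b}q_i$ with $b\in M_\beta$, $i=+\beta$, provided $x_\beta$ begins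 with $b$, removing it; everything else unchanged. $\vdash^*$ denotes reachability by finitely many steps. $\mathbf L(S)=\{C: (S^0,C^0)\vdash^*(S,C)\}\subseteq\prod_{\xi\in E}M_\xi^*$. A subset of the monoid $\prod_{\xi\in E}M_\xi^*$ (componentwise concatenation) is rational if it belongs to the smallest family containing the finite sets and closed under union, product and Kleene star; it is recognizable if it is a finite union of sets $\prod_{\xi\in E}L_\xi$ with each $L_\xi\subseteq M_\xi^*$ a regular language. $\mathbf P$ has the rational (resp. recognizable) channel property if $\mathbf L(S)$ is rational (resp. recognizable) for every composite state $S$. $\mathbf P$ is cyclic if $G$ is a directed cycle. *)

theory Defs
  imports Main
begin

definition lconc :: "'a list set \<Rightarrow> 'a list set \<Rightarrow> 'a list set" where
  "lconc A B = {x @ y | x y. x \<in> A \<and> y \<in> B}"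

inductive_set lstar :: "'a list set \<Rightarrow> 'a list set" for A where
  lstar_nil: "[] \<in> lstar A"
| lstar_app: "x \<in> A \<Longrightarrow> y \<in> lstar A \<Longrightarrow> x @ y \<in> lstar A"

inductive regular :: "'a list set \<Rightarrow> bool" where
  reg_finite: "finite A \<Longrightarrow> regular A"
| reg_union: "regular A \<Longrightarrow> regular B \<Longrightarrow> regular (A \<union> B)"
| reg_conc: "regular A \<Longrightarrow> regular B \<Longrightarrow> regular (lconc A B)"
| reg_star: "regular A \<Longrightarrow> regular (lstar A)"

text \<open>Edges form a finite type 'e, so E = UNIV. A channel content is a function
  'e \<Rightarrow> 'm list whose component at \<xi> lies in M \<xi>*.\<close>

definition chan_monoid :: "('e \<Rightarrow> 'm set) \<Rightarrow> ('e \<Rightarrow> 'm list) set" where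
  "chan_monoid M = {C. \<forall>\<xi>. C \<xi> \<in> lists (M \<xi>)}"

definition cprod :: "('e \<Rightarrow> 'm list) set \<Rightarrow> ('e \<Rightarrow> 'm list) set \<Rightarrow> ('e \<Rightarrow> 'm list) set" where
  "cprod A B = {(\<lambda>\<xi>. x \<xi> @ y \<xi>) | x y. x \<in> A \<and> y \<in> B}"

inductive_set cstar :: "('e \<Rightarrow> 'm list) set \<Rightarrow> ('e \<Rightarrow> 'm list) set" for A where
  cstar_unit: "(\<lambda>\<xi>. []) \<in> cstar A"
| cstar_app: "x \<in> A \<Longrightarrow> y \<in> cstar A \<Longrightarrow> (\<lambda>\<xi>. x \<xi> @ y \<xi>) \<in> cstar A"

inductive rational :: "('e \<Rightarrow> 'm set) \<Rightarrow> ('e \<Rightarrow> 'm list) set \<Rightarrow> bool" for M where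
  rat_finite: "finite A \<Longrightarrow> A \<subseteq> chan_monoid M \<Longrightarrow> rational M A"
| rat_union: "rational M A \<Longrightarrow> rational M B \<Longrightarrow> rational M (A \<union> B)"
| rat_prod: "rational M A \<Longrightarrow> rational M B \<Longrightarrow> rational M (cprod A B)"
| rat_star: "rational M A \<Longrightarrow> rational M (cstar A)"

definition recognizable :: "('e \<Rightarrow> 'm set) \<Rightarrow> ('e \<Rightarrow> 'm list) set \<Rightarrow> bool" where
  "recognizable M A \<longleftrightarrow>
     (\<exists>F :: ('e \<Rightarrow> 'm list set) set. finite F \<and>
        (\<forall>L\<in>F. \<forall>\<xi>. L \<xi> \<subseteq> lists (M \<xi>) \<and> regular (L \<xi>)) \<and>
        A = (\<Union>L\<in>F. {C. \<forall>\<xi>. C \<xi> \<in> L \<xi>}))"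

datatype 'm act = Snd 'm | Rcv 'm

text \<open>Communication graph: nodes = finite type 'n, edges = finite type 'e,
  tail \<xi> = -\<xi>, head \<xi> = +\<xi>.  Snd b means -b (send), Rcv b means +b (receive).\<close>

definition cfsm_protocol ::
  "('e::finite \<Rightarrow> 'n::finite) \<Rightarrow> ('e \<Rightarrow> 'n) \<Rightarrow> ('e \<Rightarrow> 'm set) \<Rightarrow> ('n \<Rightarrow> 's set)
    \<Rightarrow> ('n \<Rightarrow> ('s \<times> 'm act \<times> 's) set) \<Rightarrow> ('n \<Rightarrow> 's) \<Rightarrow> bool" where
  "cfsm_protocol tail head M K T h \<longleftrightarrow>
     (\<forall>\<xi>. finite (M \<xi>)) \<and>
     (\<forall>\<xi> \<eta>. \<xi> \<noteq> \<eta> \<longrightarrow> M \<xi> \<inter> M \<eta> = {}) \<and>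
     (\<forall>j. finite (K j) \<and> h j \<in> K j) \<and>
     (\<forall>j p a q. (p, a, q) \<in> T j \<longrightarrow> p \<in> K j \<and> q \<in> K j \<and>
        (case a of Snd b \<Rightarrow> \<exists>\<xi>. b \<in> M \<xi> \<and> tail \<xi> = j
                 | Rcv b \<Rightarrow> \<exists>\<xi>. b \<in> M \<xi> \<and> head \<xi> = j))"

text \<open>The communication graph is a directed cycle: every node has exactly one outgoing
  and exactly one incoming edge, and the graph is strongly connected.\<close>
definition cyclic_graph :: "('e::finite \<Rightarrow> 'n::finite) \<Rightarrow> ('e \<Rightarrow> 'n) \<Rightarrow> bool" where
  "cyclic_graph tail head \<longleftrightarrow> bij tail \<and> bij head \<and>
     (\<forall>i j. (i, j) \<in> {(tail \<xi>, head \<xi>) | \<xi>. True}\<^sup>*)"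

inductive cfsm_step ::
  "('e \<Rightarrow> 'n) \<Rightarrow> ('e \<Rightarrow> 'n) \<Rightarrow> ('e \<Rightarrow> 'm set) \<Rightarrow> ('n \<Rightarrow> ('s \<times> 'm act \<times> 's) set)
    \<Rightarrow> ('n \<Rightarrow> 's) \<times> ('e \<Rightarrow> 'm list) \<Rightarrow> ('n \<Rightarrow> 's) \<times> ('e \<Rightarrow> 'm list) \<Rightarrow> bool"
  for tail head M T where
  send: "(S i, Snd b, q) \<in> T i \<Longrightarrow> b \<in> M \<beta> \<Longrightarrow> tail \<beta> = i \<Longrightarrow>
         cfsm_step tail head M T (S, C) (S(i := q), C(\<beta> := C \<beta> @ [b]))"
| recv: "(S i, Rcv b, q) \<in> T i \<Longrightarrow> b \<in> M \<beta> \<Longrightarrow> head \<beta> = i \<Longrightarrow> C \<beta> = b # w \<Longrightarrow>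
         cfsm_step tail head M T (S, C) (S(i := q), C(\<beta> := w))"

definition reach_L ::
  "('e \<Rightarrow> 'n) \<Rightarrow> ('e \<Rightarrow> 'n) \<Rightarrow> ('e \<Rightarrow> 'm set) \<Rightarrow> ('n \<Rightarrow> ('s \<times> 'm act \<times> 's) set)
    \<Rightarrow> ('n \<Rightarrow> 's) \<Rightarrow> ('n \<Rightarrow> 's) \<Rightarrow> ('e \<Rightarrow> 'm list) set" where
  "reach_L tail head M T h S = {C. (cfsm_step tail head M T)\<^sup>*\<^sup>* (h, \<lambda>\<xi>. []) (S, C)}"

definition Q_set ::
  "('e \<Rightarrow> 'n) \<Rightarrow> ('e \<Rightarrow> 'n) \<Rightarrow> ('e \<Rightarrow> 'm set) \<Rightarrow> ('n \<Rightarrow> ('s \<times> 'm act \<times> 's) set)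
    \<Rightarrow> ('n \<Rightarrow> 's) \<Rightarrow> 'e \<Rightarrow> ('n \<Rightarrow> 's) \<Rightarrow> 'm list set" where
  "Q_set tail head M T h \<beta> S =
     {C \<beta> | C. C \<in> reach_L tail head M T h S \<and> (\<forall>\<xi>. \<xi> \<noteq> \<beta> \<longrightarrow> C \<xi> = [])}"

definition composite_state :: "('n \<Rightarrow> 's set) \<Rightarrow> ('n \<Rightarrow> 's) \<Rightarrow> bool" where
  "composite_state K S \<longleftrightarrow> (\<forall>j. S j \<in> K j)"

definition rational_channel_property where
  "rational_channel_property tail head M K T h \<longleftrightarrow>
     (\<forall>S. composite_state K S \<longrightarrow> rational M (reach_L tail head M T h S))"

definition recognizable_channel_property where
  "recognizable_channel_property tail head M K T h \<longleftrightarrow>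
     (\<forall>S. composite_state K S \<longrightarrow> recognizable M (reach_L tail head M T h S))"

end

theory Submission
  imports Defs "HOL-Library.Sublist" "HOL-Library.Cardinality" "HOL-Library.FuncSet"
begin

text \<open>(a) implies (b) because a product of regular languages, one per channel, is a product of
  rational sets each living on a single channel; (b) implies (c) because the section of a rational
  set at one channel, all other channels being empty, is rational in a free monoid, i.e. regular;
  (c) implies (d) trivially.

  For (d) implies (a), number the machines around the cycle starting at the receiver of \<^term>\<open>\<beta>\<close>.
  Every reachable configuration is reached in stages: first a reachable configuration in which
  only \<^term>\<open>\<beta>\<close> is nonempty, then each other machine in turn along the cycle runs a local
  path consuming only what its predecessor produced, while the machine writing to
  \<^term>\<open>\<beta>\<close> stays idle. The contents of \<^term>\<open>\<beta>\<close> at the first stage range over the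
  regular set \<open>Q\<^sub>\<beta>(S')\<close>, and each further stage applies to the channel contents a regular
  transduction that preserves recognizability. Regularity is handled throughout through the
  finiteness of the set of left quotients.\<close>

section \<open>Regular languages and left quotients\<close>

definition lquot :: "'a list \<Rightarrow> 'a list set \<Rightarrow> 'a list set" where
  "lquot u A = {v. u @ v \<in> A}"

definition finite_lquots :: "'a list set \<Rightarrow> bool" where
  "finite_lquots A \<longleftrightarrow> finite (range (\<lambda>u. lquot u A))"

lemma lquot_Nil [simp]: "lquot [] A = A"
  by (simp add: lquot_def)

lemma lquot_append: "lquot (u @ v) A = lquot v (lquot u A)"
  by (simp add: lquot_def)

lemma finite_lquots_lquot: "finite_lquots A \<Longrightarrow> finite_lquots (lquot u A)"
  unfolding finite_lquots_def
  by (rule finite_subset[of _ "range (\<lambda>u. lquot u A)"]) (auto simp: lquot_append[symmetric])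

lemma finite_lquots_level: "finite_lquots A \<Longrightarrow> finite_lquots {u. lquot u A = D}"
  unfolding finite_lquots_def
proof (rule finite_subset[of _ "(\<lambda>Y. {u. lquot u Y = D}) ` range (\<lambda>u. lquot u A)"])
  show "range (\<lambda>v. lquot v {u. lquot u A = D}) \<subseteq> (\<lambda>Y. {u. lquot u Y = D}) ` range (\<lambda>u. lquot u A)"
  proof
    fix Z assume "Z \<in> range (\<lambda>v. lquot v {u. lquot u A = D})"
    then obtain v where "Z = {u. lquot u (lquot v A) = D}" by (auto simp: lquot_def lquot_append[symmetric])
    then show "Z \<in> (\<lambda>Y. {u. lquot u Y = D}) ` range (\<lambda>u. lquot u A)" by blast
  qed
qed simp

lemma lconcI: "x \<in> A \<Longrightarrow> y \<in> B \<Longrightarrow> x @ y \<in> lconc A B"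
  unfolding lconc_def by blast

lemma lconcE: "z \<in> lconc A B \<Longrightarrow> (\<And>x y. z = x @ y \<Longrightarrow> x \<in> A \<Longrightarrow> y \<in> B \<Longrightarrow> P) \<Longrightarrow> P"
  unfolding lconc_def by blast

lemma lconc_lists: "A \<subseteq> lists S \<Longrightarrow> B \<subseteq> lists S \<Longrightarrow> lconc A B \<subseteq> lists S"
proof
  fix z assume "A \<subseteq> lists S" "B \<subseteq> lists S" "z \<in> lconc A B"
  from \<open>z \<in> lconc A B\<close> obtain x y where "z = x @ y" "x \<in> A" "y \<in> B" by (rule lconcE)
  then show "z \<in> lists S" using \<open>A \<subseteq> lists S\<close> \<open>B \<subseteq> lists S\<close> by auto
qed

lemma lstar_append: "x \<in> lstar A \<Longrightarrow> y \<in> lstar A \<Longrightarrow> x @ y \<in> lstar A"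
  by (induction x rule: lstar.induct) (auto intro: lstar.lstar_app)

lemma lstar_lists: "A \<subseteq> lists S \<Longrightarrow> lstar A \<subseteq> lists S"
proof
  fix x assume "x \<in> lstar A" "A \<subseteq> lists S"
  then show "x \<in> lists S" by (induction rule: lstar.induct) auto
qed

lemma lstar_Int_lists: "lstar A \<inter> lists S = lstar (A \<inter> lists S)"
proof (intro equalityI subsetI)
  fix z assume "z \<in> lstar A \<inter> lists S"
  then have "z \<in> lstar A" "z \<in> lists S" by auto
  then show "z \<in> lstar (A \<inter> lists S)"
    by (induction z rule: lstar.induct) (auto intro: lstar.intros)
next
  fix z assume "z \<in> lstar (A \<inter> lists S)"
  then show "z \<in> lstar A \<inter> lists S"
    by (induction z rule: lstar.induct) (auto intro: lstar.intros)
qed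

lemma regular_Union: "finite F \<Longrightarrow> (\<And>B. B \<in> F \<Longrightarrow> regular B) \<Longrightarrow> regular (\<Union>F)"
  by (induction F rule: finite_induct) (auto intro: regular.intros)

text \<open>Kleene's construction, with the left quotients of a fixed language as the states of its
  minimal automaton: kleene_words S P X Y consists of the words over S leading from state X to
  state Y through intermediate states in P only.\<close>

definition kleene_words :: "'a set \<Rightarrow> 'a list set set \<Rightarrow> 'a list set \<Rightarrow> 'a list set \<Rightarrow> 'a list set"
  where "kleene_words S P X Y =
    {w \<in> lists S. lquot w X = Y \<and> (\<forall>i. 0 < i \<and> i < length w \<longrightarrow> lquot (take i w) X \<in> P)}"

lemma finite_kleene_words_empty: "finite S \<Longrightarrow> finite (kleene_words S {} X Y)"
proof (rule finite_subset)
  show "kleene_words S {} X Y \<subseteq> insert [] ((\<lambda>a. [a]) ` S)"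
  proof
    fix w assume w: "w \<in> kleene_words S {} X Y"
    then have "\<not> 1 < length w"
      unfolding kleene_words_def using zero_less_one by blast
    with w show "w \<in> insert [] ((\<lambda>a. [a]) ` S)"
      unfolding kleene_words_def by (cases w) auto
  qed
qed simp

lemma kleene_words_mono: "P \<subseteq> P' \<Longrightarrow> kleene_words S P X Y \<subseteq> kleene_words S P' X Y"
  unfolding kleene_words_def by blast

lemma kleene_words_append:
  assumes u: "u \<in> kleene_words S P X Z" and v: "v \<in> kleene_words S P Z Y" and Z: "Z \<in> P"
  shows "u @ v \<in> kleene_words S P X Y"
proof -
  have uZ: "lquot u X = Z" using u by (simp add: kleene_words_def)
  have "lquot (take i (u @ v)) X \<in> P" if "0 < i" "i < length (u @ v)" for i
  proof (cases "i \<le> length u")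
    case True
    show ?thesis
    proof (cases "i = length u")
      case False
      with True have "i < length u" by simp
      with u that(1) show ?thesis by (simp add: kleene_words_def)
    qed (simp add: uZ Z)
  next
    case False
    then have "lquot (take i (u @ v)) X = lquot (take (i - length u) v) Z"
      by (simp add: lquot_append uZ)
    then show ?thesis using v False that by (auto simp: kleene_words_def)
  qed
  then show ?thesis using u v by (auto simp: kleene_words_def lquot_append)
qed

lemma lstar_kleene_words: "lstar (kleene_words S P Z Z) \<subseteq> kleene_words S (insert Z P) Z Z"
proof
  fix x assume "x \<in> lstar (kleene_words S P Z Z)"
  then show "x \<in> kleene_words S (insert Z P) Z Z"
  proof (induction x rule: lstar.induct)
    case lstar_nil
    then show ?case by (simp add: kleene_words_def)
  next
    case (lstar_app x y)
    then show ?case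
      using kleene_words_mono[of P "insert Z P"] by (intro kleene_words_append) auto
  qed
qed

lemma kleene_words_split:
  assumes w: "w \<in> kleene_words S (insert Z P) X Y"
  shows "w \<in> kleene_words S P X Y \<or>
    (\<exists>u v. w = u @ v \<and> u \<in> kleene_words S P X Z \<and> v \<in> kleene_words S (insert Z P) Z Y
       \<and> length v < length w)"
proof (cases "\<exists>i. 0 < i \<and> i < length w \<and> lquot (take i w) X = Z")
  case False
  then show ?thesis using w unfolding kleene_words_def by auto
next
  case True
  define i where "i = (LEAST i. 0 < i \<and> i < length w \<and> lquot (take i w) X = Z)"
  have i: "0 < i" "i < length w" "lquot (take i w) X = Z"
    using LeastI_ex[OF True] unfolding i_def by auto
  have before: "lquot (take j w) X \<noteq> Z" if "0 < j" "j < i" for j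
  proof
    assume "lquot (take j w) X = Z"
    with that i have "0 < j \<and> j < length w \<and> lquot (take j w) X = Z" by simp
    with not_less_Least[OF \<open>j < i\<close>[unfolded i_def]] show False by blast
  qed
  have wS: "w \<in> lists S" using w by (simp add: kleene_words_def)
  have "take i w \<in> kleene_words S P X Z"
    using w i before wS unfolding kleene_words_def by (auto dest: in_set_takeD)
  moreover have "drop i w \<in> kleene_words S (insert Z P) Z Y"
  proof -
    have "lquot (drop i w) Z = Y"
      using w i lquot_append[of "take i w" "drop i w" X] by (simp add: kleene_words_def)
    moreover have "lquot (take j (drop i w)) Z \<in> insert Z P"
      if "0 < j" "j < length (drop i w)" for j
    proof -
      have "take (i + j) w = take i w @ take j (drop i w)" by (simp add: take_add)
      moreover have "lquot (take (i + j) w) X \<in> insert Z P"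
        using w that i unfolding kleene_words_def by auto
      ultimately show ?thesis using i by (simp add: lquot_append)
    qed
    ultimately show ?thesis using wS unfolding kleene_words_def by (auto dest: in_set_dropD)
  qed
  ultimately show ?thesis using i by (intro disjI2 exI[of _ "take i w"] exI[of _ "drop i w"]) auto
qed

lemma kleene_words_loop:
  "w \<in> kleene_words S (insert Z P) Z Y \<Longrightarrow>
     w \<in> lconc (lstar (kleene_words S P Z Z)) (kleene_words S P Z Y)"
proof (induction "length w" arbitrary: w rule: less_induct)
  case less
  from kleene_words_split[OF less.prems] show ?case
  proof
    assume "w \<in> kleene_words S P Z Y"
    then show ?thesis using lconcI[OF lstar.lstar_nil] by fastforce
  next
    assume "\<exists>u v. w = u @ v \<and> u \<in> kleene_words S P Z Z \<and>
      v \<in> kleene_words S (insert Z P) Z Y \<and> length v < length w"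
    then obtain u v where uv: "w = u @ v" "u \<in> kleene_words S P Z Z"
      "v \<in> kleene_words S (insert Z P) Z Y" "length v < length w"
      by blast
    from less.hyps[OF uv(4) uv(3)] obtain s t
      where "v = s @ t" "s \<in> lstar (kleene_words S P Z Z)" "t \<in> kleene_words S P Z Y"
      by (auto elim: lconcE)
    then show ?thesis using uv by (metis append_assoc lconcI lstar.lstar_app)
  qed
qed

lemma kleene_words_insert:
  "kleene_words S (insert Z P) X Y =
     kleene_words S P X Y \<union>
     lconc (kleene_words S P X Z) (lconc (lstar (kleene_words S P Z Z)) (kleene_words S P Z Y))"
  (is "?L = ?R")
proof
  show "?L \<subseteq> ?R"
  proof
    fix w assume "w \<in> ?L"
    from kleene_words_split[OF this] show "w \<in> ?R"
      using kleene_words_loop lconcI by blast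
  qed
next
  have sub: "kleene_words S P A B \<subseteq> kleene_words S (insert Z P) A B" for A B
    by (rule kleene_words_mono) auto
  show "?R \<subseteq> ?L"
  proof
    fix w assume "w \<in> ?R"
    then consider "w \<in> kleene_words S P X Y"
      | u s t where "w = u @ s @ t" "u \<in> kleene_words S P X Z"
          "s \<in> lstar (kleene_words S P Z Z)" "t \<in> kleene_words S P Z Y"
      by (auto elim!: lconcE)
    then show "w \<in> ?L"
    proof cases
      case 2
      have "s \<in> kleene_words S (insert Z P) Z Z" "t \<in> kleene_words S (insert Z P) Z Y"
        using 2 lstar_kleene_words sub by blast+
      then have "s @ t \<in> kleene_words S (insert Z P) Z Y" by (rule kleene_words_append) simp
      moreover have "u \<in> kleene_words S (insert Z P) X Z" using 2 sub by blast
      ultimately show ?thesis using 2 kleene_words_append[of u S "insert Z P" X Z "s @ t" Y] by simp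
    qed (use sub in blast)
  qed
qed

lemma regular_kleene_words:
  assumes "finite S" "finite P"
  shows "regular (kleene_words S P X Y)"
  using assms(2)
proof (induction P arbitrary: X Y rule: finite_induct)
  case empty
  then show ?case using assms(1) by (simp add: finite_kleene_words_empty reg_finite)
next
  case (insert Z P)
  then show ?case by (simp add: kleene_words_insert reg_union reg_conc reg_star)
qed

lemma regular_if_finite_lquots:
  assumes "finite S" "A \<subseteq> lists S" "finite_lquots A"
  shows "regular A"
proof -
  define Q where "Q = range (\<lambda>u. lquot u A)"
  have "A = (\<Union>Y\<in>{Y \<in> Q. [] \<in> Y}. kleene_words S Q A Y)"
  proof (intro equalityI subsetI)
    fix w assume "w \<in> A"
    then have "w \<in> kleene_words S Q A (lquot w A)" "lquot w A \<in> {Y \<in> Q. [] \<in> Y}"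
      using assms(2) by (auto simp: kleene_words_def Q_def lquot_def)
    then show "w \<in> (\<Union>Y\<in>{Y \<in> Q. [] \<in> Y}. kleene_words S Q A Y)" by blast
  qed (auto simp: kleene_words_def lquot_def)
  also have "regular \<dots>"
    using assms by (intro regular_Union) (auto simp: Q_def finite_lquots_def intro: regular_kleene_words)
  finally show ?thesis .
qed

lemma regular_finite_alphabet: "regular A \<Longrightarrow> \<exists>S. finite S \<and> A \<subseteq> lists S"
proof (induction rule: regular.induct)
  case (reg_finite A)
  have "A \<subseteq> lists (\<Union>(set ` A))" by auto
  then show ?case using reg_finite by blast
next
  case (reg_union A B)
  then obtain S1 S2 where "finite S1" "A \<subseteq> lists S1" "finite S2" "B \<subseteq> lists S2" by blast
  then have "A \<union> B \<subseteq> lists (S1 \<union> S2)" by (auto intro: lists_mono[THEN subsetD])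
  then show ?case using \<open>finite S1\<close> \<open>finite S2\<close> by blast
next
  case (reg_conc A B)
  then obtain S1 S2 where "finite S1" "A \<subseteq> lists S1" "finite S2" "B \<subseteq> lists S2" by blast
  then have "A \<subseteq> lists (S1 \<union> S2)" "B \<subseteq> lists (S1 \<union> S2)"
    by (auto intro: lists_mono[THEN subsetD])
  then have "lconc A B \<subseteq> lists (S1 \<union> S2)" by (rule lconc_lists)
  then show ?case using \<open>finite S1\<close> \<open>finite S2\<close> by blast
next
  case (reg_star A)
  then obtain S where "finite S" "A \<subseteq> lists S" by blast
  then show ?case by (blast dest: lstar_lists)
qed

lemma lquot_lconc:
  "lquot u (lconc A B) = lconc (lquot u A) B \<union> (\<Union>v\<in>{v. \<exists>t\<in>A. u = t @ v}. lquot v B)"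
proof (intro equalityI subsetI)
  fix w assume "w \<in> lquot u (lconc A B)"
  then obtain x y where xy: "u @ w = x @ y" "x \<in> A" "y \<in> B" by (auto simp: lquot_def lconc_def)
  from xy(1) obtain us where "u = x @ us \<and> us @ w = y \<or> u @ us = x \<and> w = us @ y"
    by (auto simp: append_eq_append_conv2)
  then show "w \<in> lconc (lquot u A) B \<union> (\<Union>v\<in>{v. \<exists>t\<in>A. u = t @ v}. lquot v B)"
    using xy by (auto simp: lquot_def lconc_def)
next
  fix w assume "w \<in> lconc (lquot u A) B \<union> (\<Union>v\<in>{v. \<exists>t\<in>A. u = t @ v}. lquot v B)"
  then show "w \<in> lquot u (lconc A B)"
    by (auto simp: lquot_def lconc_def) (metis append.assoc)+
qed

lemma lquot_lstar_aux:
  "z \<in> lstar A \<Longrightarrow> z = u @ w \<Longrightarrow> u \<noteq> [] \<Longrightarrow>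
     \<exists>t v. u = t @ v \<and> t \<in> lstar A \<and> v \<noteq> [] \<and> w \<in> lconc (lquot v A) (lstar A)"
proof (induction z arbitrary: u rule: lstar.induct)
  case lstar_nil
  then show ?case by simp
next
  case (lstar_app x y)
  from lstar_app.prems(1) obtain us
    where "x = u @ us \<and> w = us @ y \<or> x @ us = u \<and> y = us @ w"
    by (auto simp: append_eq_append_conv2)
  then show ?case
  proof
    assume "x = u @ us \<and> w = us @ y"
    then have "w \<in> lconc (lquot u A) (lstar A)"
      using lstar_app by (auto simp: lquot_def lconc_def)
    then show ?thesis using lstar_app.prems(2) lstar_nil by force
  next
    assume a: "x @ us = u \<and> y = us @ w"
    show ?thesis
    proof (cases "us = []")
      case True
      then have "[] \<in> lquot u A" using a lstar_app by (simp add: lquot_def)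
      then have "[] @ w \<in> lconc (lquot u A) (lstar A)"
        using a lstar_app True by (intro lconcI) auto
      then show ?thesis using lstar_app.prems(2) lstar_nil by force
    next
      case False
      from lstar_app.IH[OF _ False] a obtain t v
        where "us = t @ v" "t \<in> lstar A" "v \<noteq> []" "w \<in> lconc (lquot v A) (lstar A)"
        by blast
      moreover have "x @ t \<in> lstar A"
        using lstar_app.hyps(1) \<open>t \<in> lstar A\<close> by (rule lstar.lstar_app)
      ultimately show ?thesis using a by (intro exI[of _ "x @ t"] exI[of _ v]) auto
    qed
  qed
qed

lemma lquot_lstar:
  assumes "u \<noteq> []"
  shows "lquot u (lstar A) =
    (\<Union>v\<in>{v. \<exists>t. u = t @ v \<and> t \<in> lstar A \<and> v \<noteq> []}. lconc (lquot v A) (lstar A))"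
proof (intro equalityI subsetI)
  fix w assume "w \<in> lquot u (lstar A)"
  then show "w \<in> (\<Union>v\<in>{v. \<exists>t. u = t @ v \<and> t \<in> lstar A \<and> v \<noteq> []}. lconc (lquot v A) (lstar A))"
    using lquot_lstar_aux[of "u @ w" A u w] assms by (auto simp: lquot_def)
next
  fix w assume "w \<in> (\<Union>v\<in>{v. \<exists>t. u = t @ v \<and> t \<in> lstar A \<and> v \<noteq> []}. lconc (lquot v A) (lstar A))"
  then obtain t v x y where "u = t @ v" "t \<in> lstar A" "v @ x \<in> A" "y \<in> lstar A" "w = x @ y"
    by (auto simp: lquot_def lconc_def)
  then have "t @ ((v @ x) @ y) \<in> lstar A" by (intro lstar_append lstar.lstar_app)
  then show "w \<in> lquot u (lstar A)" using \<open>u = t @ v\<close> \<open>w = x @ y\<close> by (simp add: lquot_def)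
qed

lemma finite_lquots_finite: "finite A \<Longrightarrow> finite_lquots A"
  unfolding finite_lquots_def
  by (rule finite_subset[where B = "Pow (\<Union>w\<in>A. set (suffixes w))"]) (auto simp: lquot_def suffix_def)

lemma finite_lquots_if_regular: "regular A \<Longrightarrow> finite_lquots A"
  unfolding finite_lquots_def
proof (induction rule: regular.induct)
  case (reg_finite A)
  then show ?case using finite_lquots_finite by (simp add: finite_lquots_def)
next
  case (reg_union A B)
  have "range (\<lambda>u. lquot u (A \<union> B)) \<subseteq>
      (\<lambda>(X, Y). X \<union> Y) ` (range (\<lambda>u. lquot u A) \<times> range (\<lambda>u. lquot u B))"
  proof
    fix Z assume "Z \<in> range (\<lambda>u. lquot u (A \<union> B))"
    then obtain u where "Z = lquot u A \<union> lquot u B" by (auto simp: lquot_def)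
    then show "Z \<in> (\<lambda>(X, Y). X \<union> Y) ` (range (\<lambda>u. lquot u A) \<times> range (\<lambda>u. lquot u B))"
      by blast
  qed
  then show ?case by (rule finite_subset) (use reg_union.IH in simp)
next
  case (reg_conc A B)
  have "range (\<lambda>u. lquot u (lconc A B)) \<subseteq>
      (\<lambda>(X, Y). lconc X B \<union> \<Union>Y) ` (range (\<lambda>u. lquot u A) \<times> Pow (range (\<lambda>u. lquot u B)))"
  proof
    fix Z assume "Z \<in> range (\<lambda>u. lquot u (lconc A B))"
    then obtain u where "Z = lconc (lquot u A) B \<union> \<Union>((\<lambda>v. lquot v B) ` {v. \<exists>t\<in>A. u = t @ v})"
      by (auto simp: lquot_lconc)
    then show "Z \<in> (\<lambda>(X, Y). lconc X B \<union> \<Union>Y) ` (range (\<lambda>u. lquot u A) \<times> Pow (range (\<lambda>u. lquot u B)))"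
      by blast
  qed
  then show ?case by (rule finite_subset) (use reg_conc.IH in simp)
next
  case (reg_star A)
  have "range (\<lambda>u. lquot u (lstar A)) \<subseteq>
      insert (lstar A) ((\<lambda>Y. \<Union>X\<in>Y. lconc X (lstar A)) ` Pow (range (\<lambda>u. lquot u A)))"
  proof
    fix Z assume "Z \<in> range (\<lambda>u. lquot u (lstar A))"
    then obtain u where Z: "Z = lquot u (lstar A)" by blast
    show "Z \<in> insert (lstar A) ((\<lambda>Y. \<Union>X\<in>Y. lconc X (lstar A)) ` Pow (range (\<lambda>u. lquot u A)))"
    proof (cases "u = []")
      case False
      then have "Z = (\<Union>X\<in>(\<lambda>v. lquot v A) ` {v. \<exists>t. u = t @ v \<and> t \<in> lstar A \<and> v \<noteq> []}. lconc X (lstar A))"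
        using Z lquot_lstar by simp
      then show ?thesis by blast
    qed (use Z in simp)
  qed
  then show ?case by (rule finite_subset) (use reg_star.IH in simp)
qed

theorem regular_iff_finite_lquots:
  "regular A \<longleftrightarrow> finite_lquots A \<and> (\<exists>S. finite S \<and> A \<subseteq> lists S)"
proof
  assume "regular A"
  then show "finite_lquots A \<and> (\<exists>S. finite S \<and> A \<subseteq> lists S)"
    using finite_lquots_if_regular regular_finite_alphabet by meson
next
  assume "finite_lquots A \<and> (\<exists>S. finite S \<and> A \<subseteq> lists S)"
  then show "regular A" using regular_if_finite_lquots by blast
qed

lemma regular_Int: "regular A \<Longrightarrow> regular B \<Longrightarrow> regular (A \<inter> B)"
proof -
  assume "regular A" "regular B"
  then have fin: "finite_lquots A" "finite_lquots B" and alph: "\<exists>S. finite S \<and> A \<subseteq> lists S"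
    by (simp_all add: regular_iff_finite_lquots)
  have "range (\<lambda>u. lquot u (A \<inter> B)) \<subseteq>
      (\<lambda>(X, Y). X \<inter> Y) ` (range (\<lambda>u. lquot u A) \<times> range (\<lambda>u. lquot u B))"
    by (auto simp: lquot_def)
  from finite_subset[OF this] fin have "finite_lquots (A \<inter> B)"
    unfolding finite_lquots_def by simp
  then show ?thesis using alph by (auto simp: regular_iff_finite_lquots)
qed

lemma regular_lquot: "regular A \<Longrightarrow> regular (lquot u A)"
proof -
  assume "regular A"
  then obtain S where "finite S" "A \<subseteq> lists S" and "finite_lquots A"
    by (auto simp: regular_iff_finite_lquots)
  moreover from \<open>A \<subseteq> lists S\<close> have "lquot u A \<subseteq> lists S" by (auto simp: lquot_def)
  ultimately show ?thesis by (blast intro: regular_if_finite_lquots finite_lquots_lquot)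
qed

lemma regular_vimage_concat_map:
  assumes "finite S" "finite_lquots X"
  shows "regular {w \<in> lists S. concat (map g w) \<in> X}"
proof -
  have "range (\<lambda>u. lquot u {w \<in> lists S. concat (map g w) \<in> X}) \<subseteq>
      insert {} ((\<lambda>Y. {v \<in> lists S. concat (map g v) \<in> Y}) ` range (\<lambda>u. lquot u X))"
  proof
    fix Z assume "Z \<in> range (\<lambda>u. lquot u {w \<in> lists S. concat (map g w) \<in> X})"
    then obtain u where Z: "Z = lquot u {w \<in> lists S. concat (map g w) \<in> X}" by blast
    show "Z \<in> insert {} ((\<lambda>Y. {v \<in> lists S. concat (map g v) \<in> Y}) ` range (\<lambda>u. lquot u X))"
    proof (cases "u \<in> lists S")
      case True
      then have "Z = {v \<in> lists S. concat (map g v) \<in> lquot (concat (map g u)) X}"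
        using Z by (auto simp: lquot_def)
      then show ?thesis by blast
    qed (use Z in \<open>auto simp: lquot_def\<close>)
  qed
  from finite_subset[OF this] assms(2) have "finite_lquots {w \<in> lists S. concat (map g w) \<in> X}"
    unfolding finite_lquots_def by simp
  then show ?thesis using assms(1) by (auto simp: regular_iff_finite_lquots)
qed

lemma regular_image_concat_map: "regular A \<Longrightarrow> regular ((\<lambda>w. concat (map g w)) ` A)"
proof (induction rule: regular.induct)
  case (reg_finite A)
  then show ?case by (simp add: regular.reg_finite)
next
  case (reg_union A B)
  then show ?case by (simp add: image_Un regular.reg_union)
next
  case (reg_conc A B)
  have "(\<lambda>w. concat (map g w)) ` lconc A B = lconc ((\<lambda>w. concat (map g w)) ` A) ((\<lambda>w. concat (map g w)) ` B)"
  proof (intro equalityI subsetI)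
    fix z assume "z \<in> (\<lambda>w. concat (map g w)) ` lconc A B"
    then obtain x y where "z = concat (map g (x @ y))" "x \<in> A" "y \<in> B" by (auto elim: lconcE)
    then show "z \<in> lconc ((\<lambda>w. concat (map g w)) ` A) ((\<lambda>w. concat (map g w)) ` B)"
      by (auto intro: lconcI)
  next
    fix z assume "z \<in> lconc ((\<lambda>w. concat (map g w)) ` A) ((\<lambda>w. concat (map g w)) ` B)"
    then obtain x y where "z = concat (map g (x @ y))" "x @ y \<in> lconc A B"
      by (auto elim!: lconcE intro: lconcI)
    then show "z \<in> (\<lambda>w. concat (map g w)) ` lconc A B" by blast
  qed
  then show ?case using reg_conc by (simp add: regular.reg_conc)
next
  case (reg_star A)
  have "(\<lambda>w. concat (map g w)) ` lstar A = lstar ((\<lambda>w. concat (map g w)) ` A)"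
  proof (intro equalityI subsetI)
    fix z assume "z \<in> (\<lambda>w. concat (map g w)) ` lstar A"
    then obtain x where "x \<in> lstar A" "z = concat (map g x)" by blast
    then show "z \<in> lstar ((\<lambda>w. concat (map g w)) ` A)"
      by (induction x arbitrary: z rule: lstar.induct) (auto intro: lstar.intros)
  next
    fix z assume "z \<in> lstar ((\<lambda>w. concat (map g w)) ` A)"
    then show "z \<in> (\<lambda>w. concat (map g w)) ` lstar A"
    proof (induction z rule: lstar.induct)
      case lstar_nil
      then show ?case using lstar.lstar_nil by force
    next
      case (lstar_app x y)
      then obtain x' y' where "x' \<in> A" "x = concat (map g x')" "y' \<in> lstar A" "y = concat (map g y')"
        by blast
      then have "x @ y = concat (map g (x' @ y'))" "x' @ y' \<in> lstar A"
        by (auto intro: lstar.lstar_app)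
      then show ?case by blast
    qed
  qed
  then show ?case using reg_star by (simp add: regular.reg_star)
qed

inductive lts_path :: "('s \<times> 'a \<times> 's) set \<Rightarrow> 's \<Rightarrow> 'a list \<Rightarrow> 's \<Rightarrow> bool" for T where
  lts_path_Nil: "lts_path T p [] p"
| lts_path_Cons: "(p, a, r) \<in> T \<Longrightarrow> lts_path T r w q \<Longrightarrow> lts_path T p (a # w) q"

lemma lts_path_Nil_iff [simp]: "lts_path T p [] q \<longleftrightarrow> p = q"
  by (auto intro: lts_path.intros elim: lts_path.cases)

lemma lts_path_Cons_iff [simp]: "lts_path T p (a # w) q \<longleftrightarrow> (\<exists>r. (p, a, r) \<in> T \<and> lts_path T r w q)"
  by (auto intro: lts_path.intros elim: lts_path.cases)

lemma lts_path_append: "lts_path T p (u @ v) q \<longleftrightarrow> (\<exists>r. lts_path T p u r \<and> lts_path T r v q)"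
  by (induction u arbitrary: p) auto

lemma lts_path_snoc: "lts_path T p u r \<Longrightarrow> (r, a, q) \<in> T \<Longrightarrow> lts_path T p (u @ [a]) q"
  by (auto simp: lts_path_append)

lemma lts_path_closed:
  "lts_path T p w q \<Longrightarrow> p \<in> K \<Longrightarrow> T \<subseteq> K \<times> L \<times> K \<Longrightarrow> q \<in> K \<and> w \<in> lists L"
  by (induction rule: lts_path.induct) auto

lemma regular_lts_path:
  assumes "finite K" "finite L" "T \<subseteq> K \<times> L \<times> K" "p \<in> K"
  shows "regular {w. lts_path T p w q}"
proof -
  have "range (\<lambda>u. lquot u {w. lts_path T p w q}) \<subseteq> (\<lambda>R. \<Union>r\<in>R. {w. lts_path T r w q}) ` Pow K"
  proof
    fix Z assume "Z \<in> range (\<lambda>u. lquot u {w. lts_path T p w q})"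
    then obtain u where "Z = lquot u {w. lts_path T p w q}" by blast
    then have "Z = (\<Union>r\<in>{r. lts_path T p u r}. {w. lts_path T r w q})"
      by (auto simp: lquot_def lts_path_append)
    moreover have "{r. lts_path T p u r} \<subseteq> K" using lts_path_closed[OF _ assms(4,3)] by blast
    ultimately show "Z \<in> (\<lambda>R. \<Union>r\<in>R. {w. lts_path T r w q}) ` Pow K" by blast
  qed
  from finite_subset[OF this] assms(1) have "finite_lquots {w. lts_path T p w q}"
    unfolding finite_lquots_def by simp
  moreover have "{w. lts_path T p w q} \<subseteq> lists L" using lts_path_closed[OF _ assms(4,3)] by blast
  ultimately show ?thesis using assms(2) regular_if_finite_lquots by blast
qed

section \<open>Recognizable and rational sets of channel contents\<close>

definition chan_box :: "('e \<Rightarrow> 'm list set) \<Rightarrow> ('e \<Rightarrow> 'm list) set" where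
  "chan_box L = {C. \<forall>\<xi>. C \<xi> \<in> L \<xi>}"

lemma recognizable_iff_chan_box:
  "recognizable M A \<longleftrightarrow>
     (\<exists>F. finite F \<and> (\<forall>L\<in>F. \<forall>\<xi>. L \<xi> \<subseteq> lists (M \<xi>) \<and> regular (L \<xi>)) \<and> A = (\<Union>L\<in>F. chan_box L))"
  unfolding recognizable_def chan_box_def by simp

lemma recognizable_chan_box:
  "(\<And>\<xi>. L \<xi> \<subseteq> lists (M \<xi>) \<and> regular (L \<xi>)) \<Longrightarrow> recognizable M (chan_box L)"
  unfolding recognizable_iff_chan_box by (intro exI[of _ "{L}"]) auto

lemma recognizable_Union:
  assumes "finite AA" "\<And>A. A \<in> AA \<Longrightarrow> recognizable M A"
  shows "recognizable M (\<Union>AA)"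
proof -
  obtain Fs where Fs: "\<And>A. A \<in> AA \<Longrightarrow> finite (Fs A) \<and>
      (\<forall>L\<in>Fs A. \<forall>\<xi>. L \<xi> \<subseteq> lists (M \<xi>) \<and> regular (L \<xi>)) \<and> A = (\<Union>L\<in>Fs A. chan_box L)"
    using assms(2) unfolding recognizable_iff_chan_box by metis
  have "\<Union>AA = (\<Union>L\<in>(\<Union>A\<in>AA. Fs A). chan_box L)"
  proof (intro equalityI subsetI)
    fix C assume "C \<in> \<Union>AA"
    then obtain A where "A \<in> AA" "C \<in> A" by blast
    then show "C \<in> (\<Union>L\<in>(\<Union>A\<in>AA. Fs A). chan_box L)" using Fs[of A] by blast
  next
    fix C assume "C \<in> (\<Union>L\<in>(\<Union>A\<in>AA. Fs A). chan_box L)"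
    then obtain A L where "A \<in> AA" "L \<in> Fs A" "C \<in> chan_box L" by blast
    then show "C \<in> \<Union>AA" using Fs[of A] by blast
  qed
  moreover have "finite (\<Union>A\<in>AA. Fs A)" using Fs assms(1) by blast
  moreover have "\<forall>L\<in>(\<Union>A\<in>AA. Fs A). \<forall>\<xi>. L \<xi> \<subseteq> lists (M \<xi>) \<and> regular (L \<xi>)" using Fs by blast
  ultimately show ?thesis unfolding recognizable_iff_chan_box by blast
qed

definition at_channel :: "'e \<Rightarrow> 'm list set \<Rightarrow> ('e \<Rightarrow> 'm list) set" where
  "at_channel \<xi> A = (\<lambda>w \<zeta>. if \<zeta> = \<xi> then w else []) ` A"

lemma cprodI: "x \<in> A \<Longrightarrow> y \<in> B \<Longrightarrow> (\<lambda>\<xi>. x \<xi> @ y \<xi>) \<in> cprod A B"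
  unfolding cprod_def by blast

lemma cprodE: "z \<in> cprod A B \<Longrightarrow> (\<And>x y. z = (\<lambda>\<xi>. x \<xi> @ y \<xi>) \<Longrightarrow> x \<in> A \<Longrightarrow> y \<in> B \<Longrightarrow> P) \<Longrightarrow> P"
  unfolding cprod_def by blast

lemma at_channelI: "w \<in> A \<Longrightarrow> (\<lambda>\<zeta>. if \<zeta> = \<xi> then w else []) \<in> at_channel \<xi> A"
  unfolding at_channel_def by blast

lemma at_channelE:
  "C \<in> at_channel \<xi> A \<Longrightarrow> (\<And>w. C = (\<lambda>\<zeta>. if \<zeta> = \<xi> then w else []) \<Longrightarrow> w \<in> A \<Longrightarrow> P) \<Longrightarrow> P"
  unfolding at_channel_def by blast

lemma at_channel_lconc: "at_channel \<xi> (lconc A B) = cprod (at_channel \<xi> A) (at_channel \<xi> B)"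
proof (intro equalityI subsetI)
  fix C assume "C \<in> at_channel \<xi> (lconc A B)"
  then obtain u v where "u \<in> A" "v \<in> B" "C = (\<lambda>\<zeta>. if \<zeta> = \<xi> then u @ v else [])"
    by (auto elim!: at_channelE lconcE)
  moreover have "(\<lambda>\<zeta>. if \<zeta> = \<xi> then u @ v else []) =
      (\<lambda>\<zeta>. (if \<zeta> = \<xi> then u else []) @ (if \<zeta> = \<xi> then v else []))"
    by auto
  ultimately show "C \<in> cprod (at_channel \<xi> A) (at_channel \<xi> B)"
    by (auto intro!: cprodI at_channelI)
next
  fix C assume "C \<in> cprod (at_channel \<xi> A) (at_channel \<xi> B)"
  then obtain u v where "u \<in> A" "v \<in> B"
      "C = (\<lambda>\<zeta>. (if \<zeta> = \<xi> then u else []) @ (if \<zeta> = \<xi> then v else []))"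
    by (auto elim!: at_channelE cprodE)
  then have "C = (\<lambda>\<zeta>. if \<zeta> = \<xi> then u @ v else [])" "u @ v \<in> lconc A B"
    by (auto simp: fun_eq_iff intro: lconcI)
  then show "C \<in> at_channel \<xi> (lconc A B)" by (auto intro: at_channelI)
qed

lemma at_channel_lstar: "at_channel \<xi> (lstar A) = cstar (at_channel \<xi> A)"
proof (intro equalityI subsetI)
  fix C assume "C \<in> at_channel \<xi> (lstar A)"
  then obtain w where w: "w \<in> lstar A" "C = (\<lambda>\<zeta>. if \<zeta> = \<xi> then w else [])"
    by (auto elim: at_channelE)
  from w show "C \<in> cstar (at_channel \<xi> A)"
  proof (induction w arbitrary: C rule: lstar.induct)
    case lstar_nil
    then have "C = (\<lambda>\<zeta>. [])" by auto
    then show ?case by (simp add: cstar.cstar_unit)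
  next
    case (lstar_app x y)
    have "C = (\<lambda>\<zeta>. (if \<zeta> = \<xi> then x else []) @ (if \<zeta> = \<xi> then y else []))"
      using lstar_app.prems by (auto simp: fun_eq_iff)
    then show ?case
      using lstar_app by (auto intro!: cstar.cstar_app at_channelI)
  qed
next
  fix C assume "C \<in> cstar (at_channel \<xi> A)"
  then show "C \<in> at_channel \<xi> (lstar A)"
  proof (induction C rule: cstar.induct)
    case cstar_unit
    have "[] \<in> lstar A" by (rule lstar.lstar_nil)
    from at_channelI[OF this, of \<xi>] show ?case by simp
  next
    case (cstar_app x y)
    then obtain u v where "u \<in> A" "v \<in> lstar A" "x = (\<lambda>\<zeta>. if \<zeta> = \<xi> then u else [])"
      "y = (\<lambda>\<zeta>. if \<zeta> = \<xi> then v else [])"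
      by (auto elim!: at_channelE)
    then have "(\<lambda>\<xi>. x \<xi> @ y \<xi>) = (\<lambda>\<zeta>. if \<zeta> = \<xi> then u @ v else [])" "u @ v \<in> lstar A"
      by (auto simp: fun_eq_iff intro: lstar.lstar_app)
    then show ?case by (auto intro: at_channelI)
  qed
qed

lemma rational_at_channel: "regular A \<Longrightarrow> rational M (at_channel \<xi> (A \<inter> lists (M \<xi>)))"
proof (induction rule: regular.induct)
  case (reg_finite A)
  have "at_channel \<xi> (A \<inter> lists (M \<xi>)) \<subseteq> chan_monoid M"
    by (auto simp: at_channel_def chan_monoid_def)
  then show ?case using reg_finite by (intro rat_finite) (auto simp: at_channel_def)
next
  case (reg_union A B)
  then show ?case by (simp add: at_channel_def Int_Un_distrib2 image_Un rat_union)
next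
  case (reg_conc A B)
  have "lconc A B \<inter> lists (M \<xi>) = lconc (A \<inter> lists (M \<xi>)) (B \<inter> lists (M \<xi>))"
    by (auto elim!: lconcE intro: lconcI)
  then show ?case using reg_conc by (simp add: at_channel_lconc rat_prod)
next
  case (reg_star A)
  then show ?case by (simp add: lstar_Int_lists at_channel_lstar rat_star)
qed

lemma rational_chan_box_on:
  assumes L: "\<And>\<zeta>. regular (L \<zeta>) \<and> L \<zeta> \<subseteq> lists (M \<zeta>)" and "finite E"
  shows "rational M {C. (\<forall>\<zeta>\<in>E. C \<zeta> \<in> L \<zeta>) \<and> (\<forall>\<zeta>. \<zeta> \<notin> E \<longrightarrow> C \<zeta> = [])}"
  using \<open>finite E\<close>
proof (induction E rule: finite_induct)
  case empty
  have "{C. (\<forall>\<zeta>\<in>{}. C \<zeta> \<in> L \<zeta>) \<and> (\<forall>\<zeta>. \<zeta> \<notin> {} \<longrightarrow> C \<zeta> = [])} = {(\<lambda>\<zeta>. [])}" by auto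
  then show ?case by (auto intro!: rat_finite simp: chan_monoid_def)
next
  case (insert \<xi> E)
  let ?P = "{C. (\<forall>\<zeta>\<in>E. C \<zeta> \<in> L \<zeta>) \<and> (\<forall>\<zeta>. \<zeta> \<notin> E \<longrightarrow> C \<zeta> = [])}"
  have "{C. (\<forall>\<zeta>\<in>insert \<xi> E. C \<zeta> \<in> L \<zeta>) \<and> (\<forall>\<zeta>. \<zeta> \<notin> insert \<xi> E \<longrightarrow> C \<zeta> = [])}
        = cprod (at_channel \<xi> (L \<xi> \<inter> lists (M \<xi>))) ?P"
  proof (intro equalityI subsetI)
    fix C assume C: "C \<in> {C. (\<forall>\<zeta>\<in>insert \<xi> E. C \<zeta> \<in> L \<zeta>) \<and> (\<forall>\<zeta>. \<zeta> \<notin> insert \<xi> E \<longrightarrow> C \<zeta> = [])}"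
    have C_eq: "C = (\<lambda>\<zeta>. (if \<zeta> = \<xi> then C \<xi> else []) @ (C(\<xi> := [])) \<zeta>)"
      by (auto simp: fun_eq_iff)
    have "C \<xi> \<in> L \<xi> \<inter> lists (M \<xi>)" using C L by auto
    then have "(\<lambda>\<zeta>. if \<zeta> = \<xi> then C \<xi> else []) \<in> at_channel \<xi> (L \<xi> \<inter> lists (M \<xi>))"
      by (rule at_channelI)
    moreover have "C(\<xi> := []) \<in> ?P" using C insert.hyps(2) by auto
    ultimately show "C \<in> cprod (at_channel \<xi> (L \<xi> \<inter> lists (M \<xi>))) ?P"
      by (subst C_eq) (rule cprodI)
  next
    fix C assume "C \<in> cprod (at_channel \<xi> (L \<xi> \<inter> lists (M \<xi>))) ?P"
    then obtain w y where "w \<in> L \<xi>" "y \<in> ?P" "C = (\<lambda>\<zeta>. (if \<zeta> = \<xi> then w else []) @ y \<zeta>)"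
      unfolding cprod_def at_channel_def by auto
    then show "C \<in> {C. (\<forall>\<zeta>\<in>insert \<xi> E. C \<zeta> \<in> L \<zeta>) \<and> (\<forall>\<zeta>. \<zeta> \<notin> insert \<xi> E \<longrightarrow> C \<zeta> = [])}"
      using insert.hyps(2) by auto
  qed
  then show ?case using insert.IH L by (simp add: rat_prod rational_at_channel)
qed

lemma rational_chan_box:
  fixes L :: "'e::finite \<Rightarrow> 'm list set"
  assumes "\<And>\<xi>. regular (L \<xi>) \<and> L \<xi> \<subseteq> lists (M \<xi>)"
  shows "rational M (chan_box L)"
  using rational_chan_box_on[of L M UNIV] assms by (simp add: chan_box_def)

lemma rational_if_recognizable:
  fixes A :: "('e::finite \<Rightarrow> 'm list) set"
  assumes "recognizable M A"
  shows "rational M A"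
proof -
  obtain F where F: "finite F" "\<forall>L\<in>F. \<forall>\<xi>. L \<xi> \<subseteq> lists (M \<xi>) \<and> regular (L \<xi>)"
    and A: "A = (\<Union>L\<in>F. chan_box L)"
    using assms unfolding recognizable_iff_chan_box by blast
  have box: "rational M (chan_box L)" if "L \<in> F" for L
    using F(2) that by (intro rational_chan_box) blast
  have "G \<subseteq> F \<Longrightarrow> rational M (\<Union>L\<in>G. chan_box L)" if "finite G" for G
    using that by (induction G rule: finite_induct) (auto intro: rat_finite rat_union box)
  then show ?thesis using F(1) A by simp
qed

definition channel_section :: "'e \<Rightarrow> ('e \<Rightarrow> 'm list) set \<Rightarrow> 'm list set" where
  "channel_section \<beta> R = {C \<beta> | C. C \<in> R \<and> (\<forall>\<xi>. \<xi> \<noteq> \<beta> \<longrightarrow> C \<xi> = [])}"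

lemma channel_sectionI: "C \<in> R \<Longrightarrow> (\<forall>\<xi>. \<xi> \<noteq> \<beta> \<longrightarrow> C \<xi> = []) \<Longrightarrow> C \<beta> \<in> channel_section \<beta> R"
  unfolding channel_section_def by blast

lemma channel_section_cprod:
  "channel_section \<beta> (cprod A B) = lconc (channel_section \<beta> A) (channel_section \<beta> B)"
proof (intro equalityI subsetI)
  fix w assume "w \<in> channel_section \<beta> (cprod A B)"
  then obtain x y where "x \<in> A" "y \<in> B" "w = x \<beta> @ y \<beta>" "\<forall>\<xi>. \<xi> \<noteq> \<beta> \<longrightarrow> x \<xi> @ y \<xi> = []"
    unfolding channel_section_def cprod_def by auto
  then show "w \<in> lconc (channel_section \<beta> A) (channel_section \<beta> B)"
    unfolding channel_section_def lconc_def by auto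
next
  fix w assume "w \<in> lconc (channel_section \<beta> A) (channel_section \<beta> B)"
  then obtain x y where "x \<in> A" "y \<in> B" "w = x \<beta> @ y \<beta>"
      "\<forall>\<xi>. \<xi> \<noteq> \<beta> \<longrightarrow> x \<xi> = []" "\<forall>\<xi>. \<xi> \<noteq> \<beta> \<longrightarrow> y \<xi> = []"
    unfolding channel_section_def lconc_def by auto
  then have "(\<lambda>\<zeta>. x \<zeta> @ y \<zeta>) \<beta> \<in> channel_section \<beta> (cprod A B)"
    by (intro channel_sectionI cprodI) auto
  then show "w \<in> channel_section \<beta> (cprod A B)" using \<open>w = x \<beta> @ y \<beta>\<close> by simp
qed

lemma channel_section_cstar: "channel_section \<beta> (cstar A) = lstar (channel_section \<beta> A)"
proof (intro equalityI subsetI)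
  fix w assume "w \<in> channel_section \<beta> (cstar A)"
  then obtain C where C: "C \<in> cstar A" "w = C \<beta>" "\<forall>\<xi>. \<xi> \<noteq> \<beta> \<longrightarrow> C \<xi> = []"
    unfolding channel_section_def by auto
  have "(\<forall>\<xi>. \<xi> \<noteq> \<beta> \<longrightarrow> C \<xi> = []) \<longrightarrow> C \<beta> \<in> lstar (channel_section \<beta> A)"
    using C(1)
  proof (induction C rule: cstar.induct)
    case cstar_unit
    then show ?case by (simp add: lstar.lstar_nil)
  next
    case (cstar_app x y)
    show ?case
    proof
      assume "\<forall>\<xi>. \<xi> \<noteq> \<beta> \<longrightarrow> x \<xi> @ y \<xi> = []"
      then have "x \<beta> \<in> channel_section \<beta> A" "y \<beta> \<in> lstar (channel_section \<beta> A)"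
        using cstar_app unfolding channel_section_def by auto
      then show "x \<beta> @ y \<beta> \<in> lstar (channel_section \<beta> A)" by (rule lstar.lstar_app)
    qed
  qed
  then show "w \<in> lstar (channel_section \<beta> A)" using C by simp
next
  fix w assume "w \<in> lstar (channel_section \<beta> A)"
  then show "w \<in> channel_section \<beta> (cstar A)"
  proof (induction w rule: lstar.induct)
    case lstar_nil
    then show ?case unfolding channel_section_def using cstar.cstar_unit by force
  next
    case (lstar_app x y)
    then obtain X Y where "X \<in> A" "x = X \<beta>" "\<forall>\<xi>. \<xi> \<noteq> \<beta> \<longrightarrow> X \<xi> = []"
      "Y \<in> cstar A" "y = Y \<beta>" "\<forall>\<xi>. \<xi> \<noteq> \<beta> \<longrightarrow> Y \<xi> = []"
      unfolding channel_section_def by auto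
    then have "(\<lambda>\<zeta>. X \<zeta> @ Y \<zeta>) \<beta> \<in> channel_section \<beta> (cstar A)"
      by (intro channel_sectionI cstar.cstar_app) auto
    then show ?case using \<open>x = X \<beta>\<close> \<open>y = Y \<beta>\<close> by simp
  qed
qed

lemma regular_channel_section: "rational M R \<Longrightarrow> regular (channel_section \<beta> R)"
proof (induction rule: rational.induct)
  case (rat_finite A)
  have "channel_section \<beta> A \<subseteq> (\<lambda>C. C \<beta>) ` A" by (auto simp: channel_section_def)
  then show ?case using rat_finite by (intro reg_finite) (simp add: finite_subset)
next
  case (rat_union A B)
  have "channel_section \<beta> (A \<union> B) = channel_section \<beta> A \<union> channel_section \<beta> B"
    by (auto simp: channel_section_def)
  then show ?case using rat_union by (simp add: reg_union)
next
  case (rat_prod A B)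
  then show ?case by (simp add: channel_section_cprod reg_conc)
next
  case (rat_star A)
  then show ?case by (simp add: channel_section_cstar reg_star)
qed

lemma Q_set_eq_channel_section:
  "Q_set tail head M T h \<beta> S = channel_section \<beta> (reach_L tail head M T h S)"
  by (simp add: Q_set_def channel_section_def)

abbreviation rcvs :: "'m act list \<Rightarrow> 'm list" where
  "rcvs w \<equiv> [b. Rcv b \<leftarrow> w]"

abbreviation snds :: "'m act list \<Rightarrow> 'm list" where
  "snds w \<equiv> [b. Snd b \<leftarrow> w]"

definition relay :: "('e \<Rightarrow> 'm list) set \<Rightarrow> 'e \<Rightarrow> 'e \<Rightarrow> 'm act list set \<Rightarrow> ('e \<Rightarrow> 'm list) set"
  where "relay R \<xi> \<eta> P =
    {C(\<xi> := drop (length (rcvs w)) (C \<xi>), \<eta> := C \<eta> @ snds w) | C w.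
       C \<in> R \<and> w \<in> P \<and> prefix (rcvs w) (C \<xi>)}"

lemma relay_UN: "relay (\<Union>i\<in>I. R i) \<xi> \<eta> P = (\<Union>i\<in>I. relay (R i) \<xi> \<eta> P)"
  unfolding relay_def by blast

lemma relay_chan_box:
  assumes "\<xi> \<noteq> \<eta>"
  shows "relay (chan_box L) \<xi> \<eta> P =
    (\<Union>D\<in>range (\<lambda>r. lquot r (L \<xi>)).
       chan_box (L(\<xi> := D, \<eta> := lconc (L \<eta>) (snds ` {w \<in> P. lquot (rcvs w) (L \<xi>) = D}))))"
  (is "_ = (\<Union>D\<in>_. chan_box (?L D))")
proof (intro equalityI subsetI)
  fix C' assume "C' \<in> relay (chan_box L) \<xi> \<eta> P"
  then obtain C w where C': "C' = C(\<xi> := drop (length (rcvs w)) (C \<xi>), \<eta> := C \<eta> @ snds w)"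
    and C: "\<And>\<zeta>. C \<zeta> \<in> L \<zeta>" and w: "w \<in> P" "prefix (rcvs w) (C \<xi>)"
    unfolding relay_def chan_box_def by blast
  define D where "D = lquot (rcvs w) (L \<xi>)"
  obtain z where "C \<xi> = rcvs w @ z" using w(2) by (auto simp: prefix_def)
  then have "drop (length (rcvs w)) (C \<xi>) \<in> D" using C[of \<xi>] by (simp add: D_def lquot_def)
  moreover have "C \<eta> @ snds w \<in> lconc (L \<eta>) (snds ` {w \<in> P. lquot (rcvs w) (L \<xi>) = D})"
    using C[of \<eta>] w(1) by (intro lconcI) (auto simp: D_def)
  ultimately have "C' \<in> chan_box (?L D)"
    using C assms unfolding C' chan_box_def by simp
  then show "C' \<in> (\<Union>D\<in>range (\<lambda>r. lquot r (L \<xi>)). chan_box (?L D))"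
    unfolding D_def by blast
next
  fix C' assume "C' \<in> (\<Union>D\<in>range (\<lambda>r. lquot r (L \<xi>)). chan_box (?L D))"
  then obtain D where "C' \<in> chan_box (?L D)" by blast
  then have C': "\<And>\<zeta>. C' \<zeta> \<in> ?L D \<zeta>" by (simp add: chan_box_def)
  from C'[of \<eta>] obtain a w
    where aw: "C' \<eta> = a @ snds w" "a \<in> L \<eta>" "w \<in> P" "lquot (rcvs w) (L \<xi>) = D"
    by (auto elim!: lconcE)
  have "C' \<xi> \<in> lquot (rcvs w) (L \<xi>)" using C'[of \<xi>] assms aw(4) by simp
  define C where "C = C'(\<xi> := rcvs w @ C' \<xi>, \<eta> := a)"
  have "C \<zeta> \<in> L \<zeta>" for \<zeta>
  proof -
    consider "\<zeta> = \<xi>" | "\<zeta> = \<eta>" | "\<zeta> \<noteq> \<xi>" "\<zeta> \<noteq> \<eta>" by blast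
    then show ?thesis
    proof cases
      case 1
      then show ?thesis using assms \<open>C' \<xi> \<in> lquot (rcvs w) (L \<xi>)\<close> by (simp add: C_def lquot_def)
    next
      case 2
      then show ?thesis using aw(2) by (simp add: C_def)
    next
      case 3
      then show ?thesis using C'[of \<zeta>] by (simp add: C_def)
    qed
  qed
  then have "C \<in> chan_box L" by (simp add: chan_box_def)
  moreover have "C' = C(\<xi> := drop (length (rcvs w)) (C \<xi>), \<eta> := C \<eta> @ snds w)"
    using assms aw(1) by (auto simp: C_def fun_eq_iff)
  moreover have "prefix (rcvs w) (C \<xi>)" using assms by (simp add: C_def)
  ultimately show "C' \<in> relay (chan_box L) \<xi> \<eta> P" unfolding relay_def using aw(3) by blast
qed

lemma regular_rcvs_level:
  assumes "regular P" "regular X"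
  shows "regular {w \<in> P. lquot (rcvs w) X = D}"
proof -
  obtain S where S: "finite S" "P \<subseteq> lists S" using regular_finite_alphabet[OF assms(1)] by blast
  have "{w \<in> P. lquot (rcvs w) X = D} = P \<inter> {w \<in> lists S. rcvs w \<in> {r. lquot r X = D}}"
    using S(2) by auto
  moreover have "regular {w \<in> lists S. rcvs w \<in> {r. lquot r X = D}}"
    using S(1) assms(2) by (intro regular_vimage_concat_map finite_lquots_level finite_lquots_if_regular)
  ultimately show ?thesis using regular_Int[OF assms(1)] by simp
qed

lemma recognizable_relay:
  assumes R: "recognizable M R" and "\<xi> \<noteq> \<eta>" and P: "regular P"
    and P_snds: "\<And>w. w \<in> P \<Longrightarrow> snds w \<in> lists (M \<eta>)"
  shows "recognizable M (relay R \<xi> \<eta> P)"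
proof -
  obtain F where F: "finite F" "\<forall>L\<in>F. \<forall>\<zeta>. L \<zeta> \<subseteq> lists (M \<zeta>) \<and> regular (L \<zeta>)"
    and R_eq: "R = (\<Union>L\<in>F. chan_box L)"
    using R unfolding recognizable_iff_chan_box by blast
  have "recognizable M (relay (chan_box L) \<xi> \<eta> P)" if "L \<in> F" for L
  proof -
    have L: "L \<zeta> \<subseteq> lists (M \<zeta>)" "regular (L \<zeta>)" for \<zeta> using F(2) that by auto
    let ?E = "\<lambda>D. lconc (L \<eta>) (snds ` {w \<in> P. lquot (rcvs w) (L \<xi>) = D})"
    have "recognizable M (chan_box (L(\<xi> := D, \<eta> := ?E D)))"
      if D_quot: "D \<in> range (\<lambda>r. lquot r (L \<xi>))" for D
    proof (rule recognizable_chan_box)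
      fix \<zeta>
      obtain r where D: "D = lquot r (L \<xi>)" using D_quot by blast
      have "D \<subseteq> lists (M \<xi>)" using L(1)[of \<xi>] by (auto simp: D lquot_def)
      moreover have "regular D" using regular_lquot[OF L(2)] D by simp
      moreover have "snds ` {w \<in> P. lquot (rcvs w) (L \<xi>) = D} \<subseteq> lists (M \<eta>)" using P_snds by auto
      then have "?E D \<subseteq> lists (M \<eta>)" using L(1)[of \<eta>] by (intro lconc_lists)
      moreover have "regular (?E D)"
        by (intro reg_conc L(2) regular_image_concat_map regular_rcvs_level P)
      ultimately show "(L(\<xi> := D, \<eta> := ?E D)) \<zeta> \<subseteq> lists (M \<zeta>) \<and> regular ((L(\<xi> := D, \<eta> := ?E D)) \<zeta>)"
        using L[of \<zeta>] by simp
    qed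
    moreover have "finite (range (\<lambda>r. lquot r (L \<xi>)))"
      using finite_lquots_if_regular[OF L(2)] by (simp add: finite_lquots_def)
    ultimately show ?thesis
      unfolding relay_chan_box[OF \<open>\<xi> \<noteq> \<eta>\<close>] by (blast intro: recognizable_Union finite_imageI)
  qed
  with F(1) show ?thesis
    unfolding R_eq relay_UN by (blast intro: recognizable_Union finite_imageI)
qed

section \<open>Cyclic protocols\<close>

lemma funpow_cycle_enumeration:
  fixes f :: "'a::finite \<Rightarrow> 'a"
  assumes "inj f" and reach: "\<And>y. \<exists>k. (f ^^ k) x = y"
  shows "bij_betw (\<lambda>k. (f ^^ k) x) {..<CARD('a)} UNIV" and "(f ^^ CARD('a)) x = x"
proof -
  define g where "g k = (f ^^ k) x" for k
  have g_Suc: "g (Suc k) = f (g k)" for k by (simp add: g_def)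
  have cancel: "g (i + d) = g i \<Longrightarrow> g d = g 0" for i d
    by (induction i) (auto simp: g_Suc dest: injD[OF \<open>inj f\<close>])
  have "\<not> inj_on g {..CARD('a)}"
  proof
    assume "inj_on g {..CARD('a)}"
    then have "card (g ` {..CARD('a)}) = Suc CARD('a)" by (simp add: card_image)
    moreover have "card (g ` {..CARD('a)}) \<le> CARD('a)" by (rule card_mono) auto
    ultimately show False by simp
  qed
  then obtain i j where "i < j" "g i = g j"
    unfolding inj_on_def by (metis linorder_neqE_nat)
  then have "g (j - i) = g 0" using cancel[of i "j - i"] by simp
  then have ex: "\<exists>p. 0 < p \<and> g p = g 0" using \<open>i < j\<close> by (intro exI[of _ "j - i"]) simp
  define p where "p = (LEAST p. 0 < p \<and> g p = g 0)"
  have p: "0 < p" "g p = g 0" using LeastI_ex[OF ex] unfolding p_def by auto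
  have p_least: "0 < q \<Longrightarrow> q < p \<Longrightarrow> g q \<noteq> g 0" for q
    using not_less_Least[of q "\<lambda>p. 0 < p \<and> g p = g 0"] unfolding p_def by blast
  have shift: "g (k + p) = g k" for k
    by (induction k) (simp_all add: p g_Suc)
  have periodic: "g (k + m * p) = g k" for k m
  proof (induction m)
    case (Suc m)
    have "k + Suc m * p = (k + m * p) + p" by simp
    then show ?case using Suc shift by metis
  qed simp
  have inj: "inj_on g {..<p}"
  proof (rule inj_onI)
    fix i j assume ij: "i \<in> {..<p}" "j \<in> {..<p}" "g i = g j"
    show "i = j"
    proof (rule ccontr)
      assume "i \<noteq> j"
      then consider "i < j" | "j < i" by linarith
      then show False
      proof cases
        case 1
        then show False using cancel[of i "j - i"] ij p_least[of "j - i"] by (simp add: less_imp_diff_less)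
      next
        case 2
        then show False using cancel[of j "i - j"] ij p_least[of "i - j"] by (simp add: less_imp_diff_less)
      qed
    qed
  qed
  have onto: "g ` {..<p} = UNIV"
  proof (intro equalityI subsetI)
    fix y :: 'a
    obtain k where "g k = y" using reach unfolding g_def by blast
    moreover have "g k = g (k mod p)" using periodic[of "k mod p" "k div p"] by simp
    ultimately show "y \<in> g ` {..<p}" using p(1) by auto
  qed simp
  have "p = CARD('a)" using card_image[OF inj] onto by simp
  then show "bij_betw (\<lambda>k. (f ^^ k) x) {..<CARD('a)} UNIV" "(f ^^ CARD('a)) x = x"
    using inj onto p(2) unfolding bij_betw_def g_def by auto
qed

lemma prefix_concat_map: "prefix u v \<Longrightarrow> prefix (concat (map g u)) (concat (map g v))"
  by (auto simp: prefix_def)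

lemma prefix_with_snds: "prefix r (snds \<pi>) \<Longrightarrow> \<exists>\<alpha>. prefix \<alpha> \<pi> \<and> snds \<alpha> = r"
proof (induction \<pi> arbitrary: r)
  case Nil
  then show ?case by simp
next
  case (Cons a \<pi>)
  show ?case
  proof (cases "r = []")
    case False
    then obtain c r' where r: "r = c # r'" by (cases r) auto
    show ?thesis
    proof (cases a)
      case (Snd d)
      then have "c = d" "prefix r' (snds \<pi>)" using Cons.prems r by auto
      with Cons.IH obtain \<alpha> where "prefix \<alpha> \<pi>" "snds \<alpha> = r'" by blast
      then show ?thesis using Snd \<open>c = d\<close> r by (intro exI[of _ "Snd d # \<alpha>"]) simp
    next
      case (Rcv d)
      then have "prefix r (snds \<pi>)" using Cons.prems by simp
      with Cons.IH obtain \<alpha> where "prefix \<alpha> \<pi>" "snds \<alpha> = r" by blast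
      then show ?thesis using Rcv by (intro exI[of _ "Rcv d # \<alpha>"]) simp
    qed
  qed (intro exI[of _ "[]"], simp)
qed

lemma causal_prefixes:
  assumes "prefix r (snds (\<pi> l))"
    and "\<And>d. d < l \<Longrightarrow> prefix (rcvs (\<pi> (Suc d))) (snds (\<pi> d))"
  shows "\<exists>\<alpha>. (\<forall>j. prefix (\<alpha> j) (\<pi> j)) \<and> (\<forall>j>l. \<alpha> j = []) \<and> snds (\<alpha> l) = r \<and>
    (\<forall>j<l. snds (\<alpha> j) = rcvs (\<alpha> (Suc j)))"
  using assms
proof (induction l arbitrary: r)
  case 0
  then obtain a where "prefix a (\<pi> 0)" "snds a = r" using prefix_with_snds by blast
  then show ?case by (intro exI[of _ "(\<lambda>j. [])(0 := a)"]) auto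
next
  case (Suc l)
  then obtain a where a: "prefix a (\<pi> (Suc l))" "snds a = r" using prefix_with_snds by blast
  have "prefix (rcvs a) (rcvs (\<pi> (Suc l)))" using a(1) by (rule prefix_concat_map)
  also have "prefix \<dots> (snds (\<pi> l))" using Suc.prems(2) by simp
  finally have "prefix (rcvs a) (snds (\<pi> l))" .
  moreover have "\<And>d. d < l \<Longrightarrow> prefix (rcvs (\<pi> (Suc d))) (snds (\<pi> d))"
    using Suc.prems(2) by simp
  ultimately obtain \<alpha> where \<alpha>: "\<forall>j. prefix (\<alpha> j) (\<pi> j)" "\<forall>j>l. \<alpha> j = []" "snds (\<alpha> l) = rcvs a"
      "\<forall>j<l. snds (\<alpha> j) = rcvs (\<alpha> (Suc j))"
    using Suc.IH by blast
  show ?case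
  proof (intro exI[of _ "\<alpha>(Suc l := a)"] conjI allI impI)
    fix j assume "j < Suc l"
    then show "snds ((\<alpha>(Suc l := a)) j) = rcvs ((\<alpha>(Suc l := a)) (Suc j))"
      using \<alpha>(3,4) by (cases "j = l") auto
  qed (use a \<alpha>(1,2) in auto)
qed

fun stage_input :: "'m list \<Rightarrow> (nat \<Rightarrow> 'm act list) \<Rightarrow> nat \<Rightarrow> 'm list" where
  "stage_input y \<pi> 0 = y"
| "stage_input y \<pi> (Suc k) = snds (\<pi> k)"

locale cyclic_protocol =
  fixes tail head :: "'e::finite \<Rightarrow> 'n::finite"
    and M :: "'e \<Rightarrow> 'm set" and K :: "'n \<Rightarrow> 's set"
    and T :: "'n \<Rightarrow> ('s \<times> 'm act \<times> 's) set" and h :: "'n \<Rightarrow> 's" and \<beta> :: 'e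
  assumes protocol: "cfsm_protocol tail head M K T h"
    and cyclic: "cyclic_graph tail head"
begin

abbreviation step where "step \<equiv> cfsm_step tail head M T"

definition reach :: "('n \<Rightarrow> 's) \<times> ('e \<Rightarrow> 'm list) \<Rightarrow> bool" where
  "reach X \<longleftrightarrow> step\<^sup>*\<^sup>* (h, \<lambda>\<xi>. []) X"

lemma reach_L_eq: "reach_L tail head M T h S = {C. reach (S, C)}"
  by (simp add: reach_L_def reach_def)

lemma reach_step: "reach X \<Longrightarrow> step X Y \<Longrightarrow> reach Y"
  unfolding reach_def by (rule rtranclp.rtrancl_into_rtrancl)

lemma reach_steps: "reach X \<Longrightarrow> step\<^sup>*\<^sup>* X Y \<Longrightarrow> reach Y"
  unfolding reach_def by (rule rtranclp_trans)

lemma bij_tail: "bij tail" and bij_head: "bij head"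
  using cyclic by (simp_all add: cyclic_graph_def)

lemma tail_eq: "tail \<xi> = j \<longleftrightarrow> \<xi> = inv tail j"
  using bij_tail by (metis bij_inv_eq_iff)

lemma head_eq: "head \<xi> = j \<longleftrightarrow> \<xi> = inv head j"
  using bij_head by (metis bij_inv_eq_iff)

lemma head_inv [simp]: "head (inv head j) = j"
  using bij_head bij_is_surj surj_f_inv_f by metis

lemma tail_inv [simp]: "tail (inv tail j) = j"
  using bij_tail bij_is_surj surj_f_inv_f by metis

lemma inv_head [simp]: "inv head (head \<xi>) = \<xi>"
  using bij_head bij_is_inj inv_f_f by metis

lemma inv_tail [simp]: "inv tail (tail \<xi>) = \<xi>"
  using bij_tail bij_is_inj inv_f_f by metis

definition N :: nat where
  "N = card (range head)"

lemma N_eq_card: "N = CARD('n)"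
  using bij_head bij_is_surj by (metis N_def)

text \<open>Machine \<^term>\<open>node k\<close> reads from channel \<^term>\<open>chan k\<close> and writes to
  \<^term>\<open>chan (Suc k)\<close>; the numbering starts at the receiving end of \<^term>\<open>\<beta>\<close>, so that
  \<^term>\<open>node (N - 1)\<close> is the machine writing to \<^term>\<open>\<beta>\<close>.\<close>

definition node :: "nat \<Rightarrow> 'n" where
  "node k = ((\<lambda>j. head (inv tail j)) ^^ k) (head \<beta>)"

definition chan :: "nat \<Rightarrow> 'e" where
  "chan k = inv head (node k)"

lemma node_Suc: "node (Suc k) = head (inv tail (node k))"
  by (simp add: node_def)

lemma node_bij: "bij_betw node {..<N} UNIV" and node_N: "node N = node 0"
proof -
  have inj: "inj (\<lambda>j. head (inv tail j))"
    by (rule injI) (metis inv_head tail_inv)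
  have "\<exists>k. node k = j" for j
  proof -
    have "(head \<beta>, j) \<in> {(tail \<xi>, head \<xi>) | \<xi>. True}\<^sup>*"
      using cyclic by (simp add: cyclic_graph_def)
    then show ?thesis
    proof (induction rule: rtrancl_induct)
      case base
      then show ?case by (intro exI[of _ 0]) (simp add: node_def)
    next
      case (step y z)
      then obtain k \<xi> where "node k = y" "y = tail \<xi>" "z = head \<xi>" by blast
      then show ?case by (intro exI[of _ "Suc k"]) (simp add: node_Suc)
    qed
  qed
  from funpow_cycle_enumeration[OF inj this[unfolded node_def]]
  show "bij_betw node {..<N} UNIV" "node N = node 0"
    unfolding node_def N_eq_card by simp_all
qed

lemma N_pos: "0 < N"
  by (simp add: N_eq_card)

lemma node_inj: "i < N \<Longrightarrow> j < N \<Longrightarrow> node i = node j \<longleftrightarrow> i = j"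
  using node_bij unfolding bij_betw_def inj_on_def by blast

lemma node_surj: "\<exists>k<N. node k = j"
  using node_bij unfolding bij_betw_def by (metis UNIV_I imageE lessThan_iff)

definition node_idx :: "'n \<Rightarrow> nat" where
  "node_idx j = (THE k. k < N \<and> node k = j)"

lemma node_idx: "node_idx j < N" "node (node_idx j) = j"
proof -
  obtain k where k: "k < N" "node k = j" using node_surj by blast
  have "node_idx j = k" unfolding node_idx_def using k node_inj by blast
  then show "node_idx j < N" "node (node_idx j) = j" using k by auto
qed

lemma node_idx_node [simp]: "k < N \<Longrightarrow> node_idx (node k) = k"
  using node_idx node_inj by blast

lemma head_chan [simp]: "head (chan k) = node k"
  by (simp add: chan_def)

lemma chan_0: "chan 0 = \<beta>"
  by (simp add: chan_def node_def)

lemma chan_N: "chan N = \<beta>"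
  using node_N chan_0 by (simp add: chan_def)

lemma chan_inj: "i < N \<Longrightarrow> j < N \<Longrightarrow> chan i = chan j \<longleftrightarrow> i = j"
  by (metis head_chan node_inj)

lemma node_ne: "i < N \<Longrightarrow> j < N \<Longrightarrow> i \<noteq> j \<Longrightarrow> node i \<noteq> node j"
  using node_inj by blast

lemma chan_ne: "i < N \<Longrightarrow> j < N \<Longrightarrow> i \<noteq> j \<Longrightarrow> chan i \<noteq> chan j"
  using chan_inj by blast

definition chan_idx :: "'e \<Rightarrow> nat" where
  "chan_idx \<xi> = node_idx (head \<xi>)"

lemma chan_idx: "chan_idx \<xi> < N" "chan (chan_idx \<xi>) = \<xi>"
  by (simp_all add: chan_idx_def node_idx chan_def)

lemma chan_idx_chan [simp]: "k < N \<Longrightarrow> chan_idx (chan k) = k"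
  by (simp add: chan_idx_def)

lemma chan_cases: obtains i where "i < N" "\<xi> = chan i"
  using chan_idx by metis

lemma chan_idx_beta: "chan_idx \<beta> = 0"
  using chan_idx_chan[of 0] chan_0 N_pos by simp

lemma chan_idx_eq_0: "chan_idx \<xi> = 0 \<longleftrightarrow> \<xi> = \<beta>"
  using chan_idx(2)[of \<xi>] chan_0 chan_idx_beta by metis

lemma inv_tail_node: "inv tail (node k) = chan (Suc k)"
  by (simp add: chan_def node_Suc)

lemma inv_head_node: "inv head (node k) = chan k"
  by (simp add: chan_def)

lemma T_Snd_msg: "(p, Snd b, q) \<in> T j \<Longrightarrow> b \<in> M (inv tail j)"
proof -
  assume "(p, Snd b, q) \<in> T j"
  then obtain \<xi> where "b \<in> M \<xi>" "tail \<xi> = j" using protocol unfolding cfsm_protocol_def by fastforce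
  then show ?thesis by (metis inv_tail)
qed

lemma T_Rcv_msg: "(p, Rcv b, q) \<in> T j \<Longrightarrow> b \<in> M (inv head j)"
proof -
  assume "(p, Rcv b, q) \<in> T j"
  then obtain \<xi> where "b \<in> M \<xi>" "head \<xi> = j" using protocol unfolding cfsm_protocol_def by fastforce
  then show ?thesis by (metis inv_head)
qed

definition act_alphabet :: "'m act set" where
  "act_alphabet = Snd ` (\<Union>\<xi>. M \<xi>) \<union> Rcv ` (\<Union>\<xi>. M \<xi>)"

lemma finite_act_alphabet: "finite act_alphabet"
  using protocol unfolding act_alphabet_def cfsm_protocol_def by auto

lemma finite_K: "finite (K j)" and h_in_K: "h j \<in> K j"
  using protocol unfolding cfsm_protocol_def by auto

lemma T_subset: "T j \<subseteq> K j \<times> act_alphabet \<times> K j"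
proof
  fix x assume "x \<in> T j"
  then obtain p a q where x: "x = (p, a, q)" "(p, a, q) \<in> T j" by (cases x) auto
  then have pq: "p \<in> K j" "q \<in> K j" using protocol unfolding cfsm_protocol_def by blast+
  have "a \<in> act_alphabet"
  proof (cases a)
    case (Snd b)
    then have "b \<in> M (inv tail j)" using T_Snd_msg x(2) by blast
    then show ?thesis using Snd unfolding act_alphabet_def by blast
  next
    case (Rcv b)
    then have "b \<in> M (inv head j)" using T_Rcv_msg x(2) by blast
    then show ?thesis using Rcv unfolding act_alphabet_def by blast
  qed
  then show "x \<in> K j \<times> act_alphabet \<times> K j" using x pq by simp
qed

lemma T_target_in_K: "(p, a, q) \<in> T j \<Longrightarrow> q \<in> K j"
  using T_subset[of j] by blast

lemma chan_monoid_upd: "C \<in> chan_monoid M \<Longrightarrow> x \<in> lists (M \<xi>) \<Longrightarrow> C(\<xi> := x) \<in> chan_monoid M"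
  unfolding chan_monoid_def by simp

lemma chan_monoid_get: "C \<in> chan_monoid M \<Longrightarrow> C \<xi> \<in> lists (M \<xi>)"
  unfolding chan_monoid_def by simp

lemma step_invariant: "step X Y \<Longrightarrow> (\<forall>j. fst X j \<in> K j) \<and> snd X \<in> chan_monoid M \<Longrightarrow>
   (\<forall>j. fst Y j \<in> K j) \<and> snd Y \<in> chan_monoid M"
proof (induction rule: cfsm_step.induct)
  case (send S i b q \<beta> C)
  then have "q \<in> K i" by (intro T_target_in_K)
  then have states: "\<forall>j. (S(i := q)) j \<in> K j" using send.prems by simp
  have "C \<beta> \<in> lists (M \<beta>)" using send.prems chan_monoid_get by simp
  then have "C \<beta> @ [b] \<in> lists (M \<beta>)" using send.hyps(2) by simp
  then have chans: "C(\<beta> := C \<beta> @ [b]) \<in> chan_monoid M" using send.prems chan_monoid_upd by simp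
  show ?case unfolding fst_conv snd_conv using states chans by blast
next
  case (recv S i b q \<beta> C w)
  then have "q \<in> K i" by (intro T_target_in_K)
  then have states: "\<forall>j. (S(i := q)) j \<in> K j" using recv.prems by simp
  have "C \<beta> \<in> lists (M \<beta>)" using recv.prems chan_monoid_get by simp
  then have "w \<in> lists (M \<beta>)" using recv.hyps(4) by simp
  then have chans: "C(\<beta> := w) \<in> chan_monoid M" using recv.prems chan_monoid_upd by simp
  show ?case unfolding fst_conv snd_conv using states chans by blast
qed

lemma reach_invariant: "reach X \<Longrightarrow> (\<forall>j. fst X j \<in> K j) \<and> snd X \<in> chan_monoid M"
proof -
  assume "reach X"
  then have "step\<^sup>*\<^sup>* (h, \<lambda>\<xi>. []) X" by (simp add: reach_def)
  then show ?thesis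
  proof (induction rule: rtranclp_induct)
    case base then show ?case using h_in_K by (simp add: chan_monoid_def)
  next
    case (step y z)
    then show ?case using step_invariant[of y z] by simp
  qed
qed

lemma lts_path_snds: "lts_path (T j) p w q \<Longrightarrow> snds w \<in> lists (M (inv tail j))"
proof (induction rule: lts_path.induct)
  case (lts_path_Nil p) then show ?case by simp
next
  case (lts_path_Cons p a r w q)
  then show ?case using T_Snd_msg by (cases a) auto
qed

lemma lts_path_steps:
  assumes "lts_path (T j) p w q" and ne: "inv head j \<noteq> inv tail j"
  shows "S j = p \<Longrightarrow> C (inv head j) = rcvs w @ rest \<Longrightarrow>
    step\<^sup>*\<^sup>* (S, C) (S(j := q), C(inv head j := rest, inv tail j := C (inv tail j) @ snds w))"
  using assms(1)
proof (induction arbitrary: S C rule: lts_path.induct)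
  case (lts_path_Nil p)
  have e: "(S(j := p), C(inv head j := rest, inv tail j := C (inv tail j) @ snds [])) = (S, C)"
    using lts_path_Nil by (auto simp: fun_eq_iff)
  show ?case unfolding e by (rule rtranclp.rtrancl_refl)
next
  case (lts_path_Cons p a r w q)
  show ?case
  proof (cases a)
    case (Snd b)
    have st: "step (S, C) (S(j := r), C(inv tail j := C (inv tail j) @ [b]))"
      using lts_path_Cons Snd T_Snd_msg by (intro cfsm_step.send) auto
    have "step\<^sup>*\<^sup>* (S(j := r), C(inv tail j := C (inv tail j) @ [b]))
       ((S(j := r))(j := q), (C(inv tail j := C (inv tail j) @ [b]))(inv head j := rest,
           inv tail j := (C(inv tail j := C (inv tail j) @ [b])) (inv tail j) @ snds w))"
      using lts_path_Cons Snd ne by (intro lts_path_Cons.IH) auto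
    moreover have "(S(j := r))(j := q) = S(j := q)" by simp
    moreover have "(C(inv tail j := C (inv tail j) @ [b]))(inv head j := rest,
           inv tail j := (C(inv tail j := C (inv tail j) @ [b])) (inv tail j) @ snds w)
        = C(inv head j := rest, inv tail j := C (inv tail j) @ snds (a # w))"
      using ne Snd by (auto simp: fun_eq_iff)
    ultimately show ?thesis using st by (metis converse_rtranclp_into_rtranclp)
  next
    case (Rcv b)
    have st: "step (S, C) (S(j := r), C(inv head j := rcvs w @ rest))"
      using lts_path_Cons Rcv T_Rcv_msg by (intro cfsm_step.recv) auto
    have "step\<^sup>*\<^sup>* (S(j := r), C(inv head j := rcvs w @ rest))
       ((S(j := r))(j := q), (C(inv head j := rcvs w @ rest))(inv head j := rest,
           inv tail j := (C(inv head j := rcvs w @ rest)) (inv tail j) @ snds w))"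
      using lts_path_Cons Rcv ne by (intro lts_path_Cons.IH) auto
    moreover have "(S(j := r))(j := q) = S(j := q)" by simp
    moreover have "(C(inv head j := rcvs w @ rest))(inv head j := rest,
           inv tail j := (C(inv head j := rcvs w @ rest)) (inv tail j) @ snds w)
        = C(inv head j := rest, inv tail j := C (inv tail j) @ snds (a # w))"
      using ne Rcv by (auto simp: fun_eq_iff)
    ultimately show ?thesis using st by (metis converse_rtranclp_into_rtranclp)
  qed
qed

definition beta_only :: "'m list \<Rightarrow> 'e \<Rightarrow> 'm list" where
  "beta_only y = (\<lambda>\<xi>. [])(\<beta> := y)"

text \<open>\<^term>\<open>staged S' y \<pi> S C\<close>: the configuration \<^term>\<open>(S, C)\<close> arises from the reachable
  configuration \<^term>\<open>(S', beta_only y)\<close> by letting \<^term>\<open>node 0\<close>, ..., \<^term>\<open>node (N - 2)\<close>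
  execute the local paths \<^term>\<open>\<pi> 0\<close>, ..., \<^term>\<open>\<pi> (N - 2)\<close> one after the other, each stage
  reading only what the previous stage has written (or \<^term>\<open>y\<close>). The machine writing to
  \<^term>\<open>\<beta>\<close> stays idle.\<close>

definition staged ::
  "('n \<Rightarrow> 's) \<Rightarrow> 'm list \<Rightarrow> (nat \<Rightarrow> 'm act list) \<Rightarrow> ('n \<Rightarrow> 's) \<Rightarrow> ('e \<Rightarrow> 'm list) \<Rightarrow> bool"
  where "staged S' y \<pi> S C \<longleftrightarrow> reach (S', beta_only y) \<and> (\<forall>k. N - 1 \<le> k \<longrightarrow> \<pi> k = []) \<and>
     (\<forall>k < N - 1. lts_path (T (node k)) (S' (node k)) (\<pi> k) (S (node k))) \<and>
     S' (node (N - 1)) = S (node (N - 1)) \<and>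
     (\<forall>k < N. prefix (rcvs (\<pi> k)) (stage_input y \<pi> k)) \<and>
     (\<forall>k < N. C (chan k) = drop (length (rcvs (\<pi> k))) (stage_input y \<pi> k))"

lemma stagedD:
  assumes "staged S' y \<pi> S C"
  shows "reach (S', beta_only y)" "\<And>k. N - 1 \<le> k \<Longrightarrow> \<pi> k = []"
    "\<And>k. k < N - 1 \<Longrightarrow> lts_path (T (node k)) (S' (node k)) (\<pi> k) (S (node k))"
    "S' (node (N - 1)) = S (node (N - 1))"
    "\<And>k. k < N \<Longrightarrow> prefix (rcvs (\<pi> k)) (stage_input y \<pi> k)"
    "\<And>k. k < N \<Longrightarrow> C (chan k) = drop (length (rcvs (\<pi> k))) (stage_input y \<pi> k)"
  using assms unfolding staged_def by blast+

lemma stagedI: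
  assumes "reach (S', beta_only y)" "\<And>k. N - 1 \<le> k \<Longrightarrow> \<pi> k = []"
    "\<And>k. k < N - 1 \<Longrightarrow> lts_path (T (node k)) (S' (node k)) (\<pi> k) (S (node k))"
    "S' (node (N - 1)) = S (node (N - 1))"
    "\<And>k. k < N \<Longrightarrow> prefix (rcvs (\<pi> k)) (stage_input y \<pi> k)"
    "\<And>k. k < N \<Longrightarrow> C (chan k) = drop (length (rcvs (\<pi> k))) (stage_input y \<pi> k)"
  shows "staged S' y \<pi> S C"
  using assms unfolding staged_def by blast

definition local_runs :: "('n \<Rightarrow> 's) \<Rightarrow> ('n \<Rightarrow> 's) \<Rightarrow> nat \<Rightarrow> 'm act list set" where
  "local_runs S' S k = {w. lts_path (T (node k)) (S' (node k)) w (S (node k))}"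

primrec stage_chans :: "('n \<Rightarrow> 's) \<Rightarrow> ('n \<Rightarrow> 's) \<Rightarrow> nat \<Rightarrow> ('e \<Rightarrow> 'm list) set" where
  "stage_chans S' S 0 = {beta_only y | y. reach (S', beta_only y)}"
| "stage_chans S' S (Suc k) = relay (stage_chans S' S k) (chan k) (chan (Suc k)) (local_runs S' S k)"

definition chans_after :: "'m list \<Rightarrow> (nat \<Rightarrow> 'm act list) \<Rightarrow> nat \<Rightarrow> 'e \<Rightarrow> 'm list" where
  "chans_after y \<pi> k \<xi> =
    (if chan_idx \<xi> < k then drop (length (rcvs (\<pi> (chan_idx \<xi>)))) (stage_input y \<pi> (chan_idx \<xi>))
     else if chan_idx \<xi> = k then stage_input y \<pi> k else [])"

lemma chans_after_Suc:
  assumes "Suc k < N"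
  shows "chans_after y \<pi> (Suc k) =
    (chans_after y \<pi> k)(chan k := drop (length (rcvs (\<pi> k))) (chans_after y \<pi> k (chan k)),
      chan (Suc k) := chans_after y \<pi> k (chan (Suc k)) @ snds (\<pi> k))"
proof
  fix \<xi>
  obtain i where i: "i < N" "\<xi> = chan i" by (rule chan_cases)
  consider "i = Suc k" | "i = k" | "i \<noteq> k" "i \<noteq> Suc k" by blast
  then show "chans_after y \<pi> (Suc k) \<xi> =
    ((chans_after y \<pi> k)(chan k := drop (length (rcvs (\<pi> k))) (chans_after y \<pi> k (chan k)),
      chan (Suc k) := chans_after y \<pi> k (chan (Suc k)) @ snds (\<pi> k))) \<xi>"
  proof cases
    case 1
    then show ?thesis using i assms by (simp add: chans_after_def)
  next
    case 2
    then have "chan i \<noteq> chan (Suc k)" using i assms chan_ne by simp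
    then show ?thesis using 2 i assms by (simp add: chans_after_def)
  next
    case 3
    then have "chan i \<noteq> chan (Suc k)" "chan i \<noteq> chan k" using i assms chan_ne by simp_all
    then show ?thesis using 3 i assms by (simp add: chans_after_def)
  qed
qed

lemma chans_after_stage_chans:
  assumes D: "staged S' y \<pi> S C"
  shows "k \<le> N - 1 \<Longrightarrow> chans_after y \<pi> k \<in> stage_chans S' S k"
proof (induction k)
  case 0
  have "chans_after y \<pi> 0 = beta_only y"
    unfolding chans_after_def beta_only_def using chan_idx_eq_0 by (auto simp: fun_eq_iff)
  then show ?case using stagedD(1)[OF D] by auto
next
  case (Suc k)
  then have k: "k < N - 1" "Suc k < N" by auto
  have "\<pi> k \<in> local_runs S' S k" using stagedD(3)[OF D k(1)] by (simp add: local_runs_def)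
  moreover have "prefix (rcvs (\<pi> k)) (chans_after y \<pi> k (chan k))"
    using stagedD(5)[OF D] k by (simp add: chans_after_def)
  ultimately show ?case
    using Suc k unfolding stage_chans.simps relay_def chans_after_Suc[OF k(2)] by fastforce
qed

lemma staged_stage_chans: "staged S' y \<pi> S C \<Longrightarrow> C \<in> stage_chans S' S (N - 1)"
proof -
  assume D: "staged S' y \<pi> S C"
  have "chans_after y \<pi> (N - 1) = C"
  proof
    fix \<xi>
    obtain i where i: "i < N" "\<xi> = chan i" by (rule chan_cases)
    show "chans_after y \<pi> (N - 1) \<xi> = C \<xi>"
    proof (cases "i < N - 1")
      case True
      then show ?thesis using i stagedD(6)[OF D] by (simp add: chans_after_def)
    next
      case False
      then have "i = N - 1" using i by simp
      then show ?thesis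
        using i stagedD(6)[OF D i(1)] stagedD(2)[OF D, of i] by (simp add: chans_after_def)
    qed
  qed
  then show ?thesis using chans_after_stage_chans[OF D, of "N - 1"] by simp
qed

lemma stage_chans_reach:
  "C \<in> stage_chans S' S k \<Longrightarrow> k \<le> N - 1 \<Longrightarrow> reach ((\<lambda>j. if node_idx j < k then S j else S' j), C)"
proof (induction k arbitrary: C)
  case 0
  then obtain y where "C = beta_only y" "reach (S', beta_only y)" by auto
  moreover have "(\<lambda>j. if node_idx j < 0 then S j else S' j) = S'" by simp
  ultimately show ?case by simp
next
  case (Suc k)
  from Suc.prems(1) obtain C0 w where C: "C = C0(chan k := drop (length (rcvs w)) (C0 (chan k)),
      chan (Suc k) := C0 (chan (Suc k)) @ snds w)" "C0 \<in> stage_chans S' S k" "w \<in> local_runs S' S k" "prefix (rcvs w) (C0 (chan k))"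
    unfolding stage_chans.simps relay_def by blast
  have k: "k < N - 1" "Suc k < N" "k < N" using Suc.prems by auto
  define Sk where "Sk = (\<lambda>j. if node_idx j < k then S j else S' j)"
  have IH: "reach (Sk, C0)" using Suc.IH[OF C(2)] k unfolding Sk_def by simp
  have lp: "lts_path (T (node k)) (Sk (node k)) w (S (node k))" using C(3) k by (simp add: local_runs_def Sk_def)
  have ne: "inv head (node k) \<noteq> inv tail (node k)" unfolding inv_head_node inv_tail_node using chan_ne k by simp
  have c0: "C0 (inv head (node k)) = rcvs w @ drop (length (rcvs w)) (C0 (chan k))"
    using C(4) unfolding inv_head_node by (auto simp: prefix_def)
  have "step\<^sup>*\<^sup>* (Sk, C0) (Sk(node k := S (node k)), C0(inv head (node k) := drop (length (rcvs w)) (C0 (chan k)),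
      inv tail (node k) := C0 (inv tail (node k)) @ snds w))"
    using lts_path_steps[OF lp ne, of Sk C0] c0 by simp
  moreover have "Sk(node k := S (node k)) = (\<lambda>j. if node_idx j < Suc k then S j else S' j)"
  proof
    fix j
    show "(Sk(node k := S (node k))) j = (if node_idx j < Suc k then S j else S' j)"
    proof (cases "j = node k")
      case True then show ?thesis using k by simp
    next
      case False
      then have "node_idx j \<noteq> k" using node_idx(2)[of j] by auto
      then show ?thesis using False by (auto simp: Sk_def)
    qed
  qed
  ultimately have "step\<^sup>*\<^sup>* (Sk, C0) ((\<lambda>j. if node_idx j < Suc k then S j else S' j), C)"
    unfolding inv_head_node inv_tail_node C(1) by simp
  then show ?case using IH reach_steps by blast
qed

lemma stage_chans_reach_full:
  "C \<in> stage_chans S' S (N - 1) \<Longrightarrow> S' (node (N - 1)) = S (node (N - 1)) \<Longrightarrow> reach (S, C)"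
proof -
  assume C: "C \<in> stage_chans S' S (N - 1)" and e: "S' (node (N - 1)) = S (node (N - 1))"
  have "(\<lambda>j. if node_idx j < N - 1 then S j else S' j) = S"
  proof
    fix j
    show "(if node_idx j < N - 1 then S j else S' j) = S j"
    proof (cases "node_idx j < N - 1")
      case False
      then have "node_idx j = N - 1" using node_idx(1)[of j] by simp
      then have "j = node (N - 1)" using node_idx(2)[of j] by simp
      then show ?thesis using e False by simp
    qed simp
  qed
  then show ?thesis using stage_chans_reach[OF C] by simp
qed

lemma staged_reach: "staged S' y \<pi> S C \<Longrightarrow> reach (S, C)"
  using staged_stage_chans stage_chans_reach_full stagedD(4) by blast


lemma staged_init: "staged h [] (\<lambda>k. []) h (\<lambda>\<xi>. [])"
proof (rule stagedI)
  have "beta_only [] = (\<lambda>\<xi>. [])" by (auto simp: beta_only_def)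
  then show "reach (h, beta_only [])" by (simp add: reach_def)
next
  fix k show "lts_path (T (node k)) (h (node k)) [] (h (node k))" by (rule lts_path_Nil)
next
  fix k :: nat assume "k < N"
  show "([] :: 'm list) = drop (length (rcvs [])) (stage_input [] (\<lambda>k. []) k)" by (cases k) auto
qed auto

lemma staged_send_inner:
  assumes D: "staged S' y \<pi> S C" and k: "k < N - 1" and t: "(S (node k), Snd b, q) \<in> T (node k)"
  shows "staged S' y (\<pi>(k := \<pi> k @ [Snd b])) (S(node k := q)) (C(chan (Suc k) := C (chan (Suc k)) @ [b]))"
proof -
  let ?\<pi> = "\<pi>(k := \<pi> k @ [Snd b])"
  have rcvs_same: "rcvs (?\<pi> j) = rcvs (\<pi> j)" for j by (cases "j = k") auto
  have input_next: "stage_input y ?\<pi> (Suc k) = stage_input y \<pi> (Suc k) @ [b]" by simp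
  have input_other: "j \<noteq> Suc k \<Longrightarrow> stage_input y ?\<pi> j = stage_input y \<pi> j" for j by (cases j) auto
  have node_other: "j < N \<Longrightarrow> j \<noteq> k \<Longrightarrow> node j \<noteq> node k" for j using node_ne k by simp
  show ?thesis
  proof (rule stagedI)
    show "reach (S', beta_only y)" by (rule stagedD(1)[OF D])
  next
    fix j assume "N - 1 \<le> j" then show "?\<pi> j = []" using stagedD(2)[OF D] k by auto
  next
    fix j assume j: "j < N - 1"
    show "lts_path (T (node j)) (S' (node j)) (?\<pi> j) ((S(node k := q)) (node j))"
    proof (cases "j = k")
      case True then show ?thesis using stagedD(3)[OF D j] t by (auto intro: lts_path_snoc)
    next
      case False then show ?thesis using stagedD(3)[OF D j] j node_other by auto
    qed
  next
    show "S' (node (N - 1)) = (S(node k := q)) (node (N - 1))" using stagedD(4)[OF D] node_other[of "N - 1"] k by auto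
  next
    fix j assume j: "j < N"
    show "prefix (rcvs (?\<pi> j)) (stage_input y ?\<pi> j)"
    proof (cases "j = Suc k")
      case True then show ?thesis using stagedD(5)[OF D j] rcvs_same input_next by simp
    next
      case False then show ?thesis using stagedD(5)[OF D j] rcvs_same input_other by simp
    qed
  next
    fix j assume j: "j < N"
    show "(C(chan (Suc k) := C (chan (Suc k)) @ [b])) (chan j) = drop (length (rcvs (?\<pi> j))) (stage_input y ?\<pi> j)"
    proof (cases "j = Suc k")
      case True
      have "C (chan j) = drop (length (rcvs (\<pi> j))) (stage_input y \<pi> j)" using stagedD(6)[OF D j] by blast
      moreover have "length (rcvs (\<pi> j)) \<le> length (stage_input y \<pi> j)" using stagedD(5)[OF D j] prefix_length_le by blast
      ultimately show ?thesis using True rcvs_same input_next by simp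
    next
      case False
      then have "chan j \<noteq> chan (Suc k)" using chan_ne j k by simp
      then show ?thesis using stagedD(6)[OF D j] rcvs_same input_other False by simp
    qed
  qed
qed

lemma staged_send_last:
  assumes D: "staged S' y \<pi> S C" and t: "(S (node (N - 1)), Snd b, q) \<in> T (node (N - 1))"
  shows "staged (S'(node (N - 1) := q)) (y @ [b]) \<pi> (S(node (N - 1) := q)) (C(\<beta> := C \<beta> @ [b]))"
proof -
  have out_last: "inv tail (node (N - 1)) = \<beta>" using inv_tail_node[of "N - 1"] N_pos chan_N by simp
  have b_in_M: "b \<in> M \<beta>" using T_Snd_msg[OF t] out_last by simp
  have tail_beta: "tail \<beta> = node (N - 1)" using out_last tail_inv by metis
  have node_other: "j < N - 1 \<Longrightarrow> node j \<noteq> node (N - 1)" for j using node_ne N_pos by simp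
  have chan_ne_beta: "0 < j \<Longrightarrow> j < N \<Longrightarrow> chan j \<noteq> \<beta>" for j using chan_ne[of j 0] N_pos chan_0 by simp
  show ?thesis
  proof (rule stagedI)
    have st: "step (S', beta_only y) (S'(node (N - 1) := q), (beta_only y)(\<beta> := beta_only y \<beta> @ [b]))"
      using t stagedD(4)[OF D] b_in_M tail_beta by (intro cfsm_step.send) auto
    have "(beta_only y)(\<beta> := beta_only y \<beta> @ [b]) = beta_only (y @ [b])" by (simp add: beta_only_def)
    then show "reach (S'(node (N - 1) := q), beta_only (y @ [b]))" using reach_step[OF stagedD(1)[OF D] st] by simp
  next
    fix j assume "N - 1 \<le> j" then show "\<pi> j = []" using stagedD(2)[OF D] by auto
  next
    fix j assume j: "j < N - 1"
    then show "lts_path (T (node j)) ((S'(node (N - 1) := q)) (node j)) (\<pi> j) ((S(node (N - 1) := q)) (node j))"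
      using stagedD(3)[OF D j] node_other by simp
  next
    show "(S'(node (N - 1) := q)) (node (N - 1)) = (S(node (N - 1) := q)) (node (N - 1))" by simp
  next
    fix j assume j: "j < N"
    show "prefix (rcvs (\<pi> j)) (stage_input (y @ [b]) \<pi> j)"
      using stagedD(5)[OF D j] by (cases j) auto
  next
    fix j assume j: "j < N"
    show "(C(\<beta> := C \<beta> @ [b])) (chan j) = drop (length (rcvs (\<pi> j))) (stage_input (y @ [b]) \<pi> j)"
    proof (cases j)
      case 0
      have "C \<beta> = drop (length (rcvs (\<pi> 0))) y" using stagedD(6)[OF D j] 0 chan_0 by simp
      moreover have "length (rcvs (\<pi> 0)) \<le> length y" using stagedD(5)[OF D j] 0 prefix_length_le by fastforce
      ultimately show ?thesis using 0 chan_0 by simp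
    next
      case (Suc j')
      then show ?thesis using stagedD(6)[OF D j] chan_ne_beta[of j] j by simp
    qed
  qed
qed

lemma staged_recv_inner:
  assumes D: "staged S' y \<pi> S C" and k: "k < N - 1" and t: "(S (node k), Rcv b, q) \<in> T (node k)"
    and c: "C (chan k) = b # w"
  shows "staged S' y (\<pi>(k := \<pi> k @ [Rcv b])) (S(node k := q)) (C(chan k := w))"
proof -
  let ?\<pi> = "\<pi>(k := \<pi> k @ [Rcv b])"
  have input_same: "stage_input y ?\<pi> j = stage_input y \<pi> j" for j by (cases j) auto
  have rcvs_k: "rcvs (?\<pi> k) = rcvs (\<pi> k) @ [b]" by simp
  have rcvs_other: "j \<noteq> k \<Longrightarrow> rcvs (?\<pi> j) = rcvs (\<pi> j)" for j by simp
  have node_other: "j < N \<Longrightarrow> j \<noteq> k \<Longrightarrow> node j \<noteq> node k" for j using node_ne k by simp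
  have kN: "k < N" using k by simp
  obtain z where z: "stage_input y \<pi> k = rcvs (\<pi> k) @ z" using stagedD(5)[OF D kN] by (auto simp: prefix_def)
  have "z = b # w" using stagedD(6)[OF D kN] c z by simp
  then have input_k: "stage_input y \<pi> k = rcvs (\<pi> k) @ b # w" using z by simp
  show ?thesis
  proof (rule stagedI)
    show "reach (S', beta_only y)" by (rule stagedD(1)[OF D])
  next
    fix j assume "N - 1 \<le> j" then show "?\<pi> j = []" using stagedD(2)[OF D] k by auto
  next
    fix j assume j: "j < N - 1"
    show "lts_path (T (node j)) (S' (node j)) (?\<pi> j) ((S(node k := q)) (node j))"
    proof (cases "j = k")
      case True then show ?thesis using stagedD(3)[OF D j] t by (auto intro: lts_path_snoc)
    next
      case False then show ?thesis using stagedD(3)[OF D j] j node_other by auto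
    qed
  next
    show "S' (node (N - 1)) = (S(node k := q)) (node (N - 1))" using stagedD(4)[OF D] node_other[of "N - 1"] k by auto
  next
    fix j assume j: "j < N"
    show "prefix (rcvs (?\<pi> j)) (stage_input y ?\<pi> j)"
    proof (cases "j = k")
      case True then show ?thesis using input_k input_same by simp
    next
      case False then show ?thesis using stagedD(5)[OF D j] input_same rcvs_other by simp
    qed
  next
    fix j assume j: "j < N"
    show "(C(chan k := w)) (chan j) = drop (length (rcvs (?\<pi> j))) (stage_input y ?\<pi> j)"
    proof (cases "j = k")
      case True then show ?thesis using input_k input_same by simp
    next
      case False
      then have "chan j \<noteq> chan k" using chan_ne j kN by simp
      then show ?thesis using stagedD(6)[OF D j] input_same rcvs_other False by simp
    qed
  qed
qed

lemma staged_recv_last_single: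
  assumes D: "staged S' y \<pi> S C" and N1: "N = 1" and t: "(S (node 0), Rcv b, q) \<in> T (node 0)"
    and c: "C \<beta> = b # w"
  shows "staged (S(node 0 := q)) w \<pi> (S(node 0 := q)) (C(\<beta> := w))"
proof -
  have allnd: "j = node 0" for j using node_surj[of j] N1 by auto
  have allch: "\<xi> = \<beta>" for \<xi> using chan_cases[of \<xi>] N1 chan_0 by (metis less_one)
  have "S' = S"
  proof
    fix x
    have "x = node 0" by (rule allnd)
    then show "S' x = S x" using stagedD(4)[OF D] N1 by simp
  qed
  have p0: "\<pi> 0 = []" using stagedD(2)[OF D, of 0] N1 by simp
  have "C \<beta> = y" using stagedD(6)[OF D, of 0] N1 p0 chan_0 by simp
  have C_beta_only: "C = beta_only y"
  proof
    fix x
    have "x = \<beta>" by (rule allch)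
    then show "C x = beta_only y x" using \<open>C \<beta> = y\<close> by (simp add: beta_only_def)
  qed
  have b_in_M: "b \<in> M \<beta>" using T_Rcv_msg[OF t] inv_head_node[of 0] chan_0 by simp
  have head_beta: "head \<beta> = node 0" using head_chan[of 0] chan_0 by simp
  show ?thesis
  proof (rule stagedI)
    have st: "step (S, beta_only y) (S(node 0 := q), (beta_only y)(\<beta> := w))"
      using t b_in_M head_beta c C_beta_only by (intro cfsm_step.recv) auto
    have "(beta_only y)(\<beta> := w) = beta_only w" by (simp add: beta_only_def)
    then show "reach (S(node 0 := q), beta_only w)" using reach_step[OF _ st] stagedD(1)[OF D] \<open>S' = S\<close> by simp
  next
    fix j assume "N - 1 \<le> j" then show "\<pi> j = []" using stagedD(2)[OF D] by auto
  next
    fix j assume "j < N - 1" then show "lts_path (T (node j)) ((S(node 0 := q)) (node j)) (\<pi> j) ((S(node 0 := q)) (node j))"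
      using N1 by simp
  next
    show "(S(node 0 := q)) (node (N - 1)) = (S(node 0 := q)) (node (N - 1))" by simp
  next
    fix j assume "j < N" then have "j = 0" using N1 by simp
    then show "prefix (rcvs (\<pi> j)) (stage_input w \<pi> j)" using p0 by simp
  next
    fix j assume "j < N" then have "j = 0" using N1 by simp
    then show "(C(\<beta> := w)) (chan j) = drop (length (rcvs (\<pi> j))) (stage_input w \<pi> j)" using p0 chan_0 by simp
  qed
qed

lemma staged_prefix:
  assumes D: "staged S' y \<pi> S C"
    and \<alpha>: "\<And>j. prefix (\<alpha> j) (\<pi> j)"
    and \<alpha>_causal: "\<And>j. Suc j < N \<Longrightarrow> prefix (rcvs (\<alpha> (Suc j))) (snds (\<alpha> j))"
  obtains Smid where
    "reach (Smid, \<lambda>\<xi>. drop (length (rcvs (\<alpha> (chan_idx \<xi>)))) (stage_input y \<alpha> (chan_idx \<xi>)))"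
    "\<And>j. j < N - 1 \<Longrightarrow>
       lts_path (T (node j)) (Smid (node j)) (drop (length (\<alpha> j)) (\<pi> j)) (S (node j))"
    "Smid (node (N - 1)) = S (node (N - 1))"
proof -
  have "\<exists>r. j < N - 1 \<longrightarrow> lts_path (T (node j)) (S' (node j)) (\<alpha> j) r \<and>
      lts_path (T (node j)) r (drop (length (\<alpha> j)) (\<pi> j)) (S (node j))" for j
  proof (cases "j < N - 1")
    case True
    have "\<pi> j = \<alpha> j @ drop (length (\<alpha> j)) (\<pi> j)" using \<alpha>[of j] by (auto simp: prefix_def)
    then show ?thesis using stagedD(3)[OF D True] lts_path_append by metis
  qed simp
  then obtain r where r: "\<And>j. j < N - 1 \<Longrightarrow> lts_path (T (node j)) (S' (node j)) (\<alpha> j) (r j)"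
    "\<And>j. j < N - 1 \<Longrightarrow> lts_path (T (node j)) (r j) (drop (length (\<alpha> j)) (\<pi> j)) (S (node j))"
    by metis
  define Smid where "Smid = (\<lambda>i. if node_idx i < N - 1 then r (node_idx i) else S i)"
  have "staged S' y \<alpha> Smid (\<lambda>\<xi>. drop (length (rcvs (\<alpha> (chan_idx \<xi>)))) (stage_input y \<alpha> (chan_idx \<xi>)))"
  proof (rule stagedI)
    fix j assume "N - 1 \<le> j"
    then show "\<alpha> j = []" using \<alpha>[of j] stagedD(2)[OF D] by simp
  next
    fix j assume "j < N"
    show "prefix (rcvs (\<alpha> j)) (stage_input y \<alpha> j)"
    proof (cases j)
      case 0
      have "prefix (rcvs (\<alpha> 0)) (rcvs (\<pi> 0))" using \<alpha>[of 0] by (rule prefix_concat_map)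
      also have "prefix \<dots> y" using stagedD(5)[OF D \<open>j < N\<close>] 0 by simp
      finally show ?thesis using 0 by simp
    next
      case (Suc j')
      then show ?thesis using \<alpha>_causal[of j'] \<open>j < N\<close> by simp
    qed
  qed (use stagedD[OF D] r N_pos in \<open>simp_all add: Smid_def\<close>)
  then have "reach (Smid, \<lambda>\<xi>. drop (length (rcvs (\<alpha> (chan_idx \<xi>)))) (stage_input y \<alpha> (chan_idx \<xi>)))"
    by (rule staged_reach)
  moreover have "lts_path (T (node j)) (Smid (node j)) (drop (length (\<alpha> j)) (\<pi> j)) (S (node j))"
    if "j < N - 1" for j
    using r(2)[OF that] that by (simp add: Smid_def)
  moreover have "Smid (node (N - 1)) = S (node (N - 1))" using N_pos by (simp add: Smid_def)
  ultimately show ?thesis by (rule that)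
qed

lemma causal_prefix_chans:
  assumes l: "N = Suc (Suc l)"
    and \<alpha>0: "\<And>j. l < j \<Longrightarrow> \<alpha> j = []" and \<alpha>3: "\<And>j. j < l \<Longrightarrow> snds (\<alpha> j) = rcvs (\<alpha> (Suc j))"
  shows "(\<lambda>\<xi>. drop (length (rcvs (\<alpha> (chan_idx \<xi>)))) (stage_input y \<alpha> (chan_idx \<xi>)))(chan (Suc l) := [])
    = beta_only (drop (length (rcvs (\<alpha> 0))) y)"
proof
  fix \<xi>
  obtain i where i: "i < N" "\<xi> = chan i" by (rule chan_cases)
  have last_ne: "chan (Suc l) \<noteq> \<beta>" using chan_ne[of "Suc l" 0] l chan_0 by simp
  consider "i = Suc l" | "i = 0" | i' where "i = Suc i'" "i' < l" using i l by (cases i) (auto simp: less_Suc_eq)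
  then show "((\<lambda>\<xi>. drop (length (rcvs (\<alpha> (chan_idx \<xi>)))) (stage_input y \<alpha> (chan_idx \<xi>)))(chan (Suc l) := [])) \<xi>
    = beta_only (drop (length (rcvs (\<alpha> 0))) y) \<xi>"
  proof cases
    case 1
    then show ?thesis using i last_ne by (simp add: beta_only_def)
  next
    case 2
    then show ?thesis using i last_ne chan_0 chan_idx_beta by (simp add: beta_only_def)
  next
    case 3
    have "chan i \<noteq> \<beta>" using chan_ne[of i 0] i 3 chan_0 by simp
    moreover have "chan i \<noteq> chan (Suc l)" using chan_ne[of i "Suc l"] i 3 l by simp
    ultimately show ?thesis using i 3 \<alpha>3 by (simp add: beta_only_def)
  qed
qed

lemma staged_restart:
  assumes D: "staged S' y \<pi> S C" and l: "N = Suc (Suc l)"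
    and split: "\<And>j. \<pi> j = \<alpha> j @ \<gamma> j"
    and \<alpha>3: "\<And>j. j < l \<Longrightarrow> snds (\<alpha> j) = rcvs (\<alpha> (Suc j))"
    and reach'': "reach (S'', beta_only (drop (length (rcvs (\<alpha> 0))) y))"
    and paths: "\<And>j. j < Suc l \<Longrightarrow> lts_path (T (node j)) (S'' (node j)) (\<gamma> j) (S (node j))"
  shows "staged S'' (drop (length (rcvs (\<alpha> 0))) y) (\<lambda>j. if j < Suc l then \<gamma> j else [])
    (S(node (Suc l) := S'' (node (Suc l)))) (C(chan (Suc l) := snds (\<gamma> l)))"
proof -
  define y'' where "y'' = drop (length (rcvs (\<alpha> 0))) y"
  define \<pi>'' where "\<pi>'' = (\<lambda>j. if j < Suc l then \<gamma> j else [])"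
  have N_eq: "N - 1 = Suc l" using l by simp
  have rsplit: "rcvs (\<pi> j) = rcvs (\<alpha> j) @ rcvs (\<gamma> j)" "snds (\<pi> j) = snds (\<alpha> j) @ snds (\<gamma> j)" for j
    using split[of j] by simp_all
  have "staged S'' y'' \<pi>'' (S(node (Suc l) := S'' (node (Suc l)))) (C(chan (Suc l) := snds (\<gamma> l)))"
  proof (rule stagedI)
    fix j assume j: "j < N - 1"
    then have "node j \<noteq> node (Suc l)" using node_ne l by simp
    then show "lts_path (T (node j)) (S'' (node j)) (\<pi>'' j) ((S(node (Suc l) := S'' (node (Suc l)))) (node j))"
      using paths j N_eq by (simp add: \<pi>''_def)
  next
    fix j assume "j < N"
    then consider "j = Suc l" | "j = 0" "0 < Suc l" | j' where "j = Suc j'" "j' < l" using l by (cases j) (auto simp: less_Suc_eq)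
    then show "prefix (rcvs (\<pi>'' j)) (stage_input y'' \<pi>'' j)"
    proof cases
      case 2
      obtain z where "y = rcvs (\<pi> 0) @ z" using stagedD(5)[OF D, of 0] N_pos by (auto simp: prefix_def)
      then show ?thesis using 2 rsplit(1)[of 0] by (simp add: \<pi>''_def y''_def)
    next
      case 3
      have "prefix (rcvs (\<pi> j)) (snds (\<pi> j'))" using stagedD(5)[OF D \<open>j < N\<close>] 3 by simp
      then show ?thesis using rsplit[of j] rsplit[of j'] \<alpha>3[of j'] 3 by (simp add: \<pi>''_def)
    qed (simp add: \<pi>''_def)
  next
    fix j assume "j < N"
    then consider "j = Suc l" | "j = 0" "0 < Suc l" | j' where "j = Suc j'" "j' < l" using l by (cases j) (auto simp: less_Suc_eq)
    then show "(C(chan (Suc l) := snds (\<gamma> l))) (chan j) = drop (length (rcvs (\<pi>'' j))) (stage_input y'' \<pi>'' j)"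
    proof cases
      case 1
      then show ?thesis by (simp add: \<pi>''_def)
    next
      case 2
      have "C (chan 0) = drop (length (rcvs (\<pi> 0))) y" using stagedD(6)[OF D, of 0] N_pos by simp
      moreover have "chan 0 \<noteq> chan (Suc l)" using chan_ne[of 0 "Suc l"] l by simp
      ultimately show ?thesis using 2 rsplit(1)[of 0] by (simp add: \<pi>''_def y''_def add.commute)
    next
      case 3
      have "C (chan j) = drop (length (rcvs (\<pi> j))) (snds (\<pi> j'))" using stagedD(6)[OF D \<open>j < N\<close>] 3 by simp
      also have "\<dots> = drop (length (rcvs (\<gamma> j))) (snds (\<gamma> j'))"
        using rsplit[of j] rsplit[of j'] \<alpha>3[of j'] 3 by simp
      moreover have "chan j \<noteq> chan (Suc l)" using chan_ne[of j "Suc l"] l 3 by simp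
      ultimately show ?thesis using 3 by (simp add: \<pi>''_def)
    qed
  qed (use reach'' N_eq in \<open>simp_all add: y''_def \<pi>''_def\<close>)
  then show ?thesis by (simp add: y''_def \<pi>''_def)
qed

text \<open>When the idle machine receives a message, it was written by stage \<^term>\<open>N - 2\<close>. Running
  only the prefixes of the stages that this message causally depends on, and then the receive,
  leads to a new configuration with only \<^term>\<open>\<beta>\<close> nonempty, from which the remainders of the
  stages form a staged run again.\<close>

lemma staged_recv_last:
  assumes D: "staged S' y \<pi> S C" and N2: "2 \<le> N"
    and t: "(S (node (N - 1)), Rcv b, q) \<in> T (node (N - 1))" and c: "C (chan (N - 1)) = b # w"
  shows "\<exists>S'' y'' \<pi>''. staged S'' y'' \<pi>'' (S(node (N - 1) := q)) (C(chan (N - 1) := w))"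
proof -
  define l where "l = N - 2"
  have N_eq: "N - 1 = Suc l" "N = Suc (Suc l)" using N2 l_def by auto
  have snl: "snds (\<pi> l) = b # w"
    using stagedD(6)[OF D, of "Suc l"] stagedD(2)[OF D, of "Suc l"] c N_eq by simp
  have "prefix [b] (snds (\<pi> l))" using snl by simp
  moreover have "prefix (rcvs (\<pi> (Suc d))) (snds (\<pi> d))" if "d < l" for d
    using stagedD(5)[OF D, of "Suc d"] that N_eq by simp
  ultimately obtain \<alpha> where \<alpha>1: "\<And>j. prefix (\<alpha> j) (\<pi> j)" and \<alpha>0: "\<And>j. l < j \<Longrightarrow> \<alpha> j = []"
    and \<alpha>2: "snds (\<alpha> l) = [b]" and \<alpha>3: "\<And>j. j < l \<Longrightarrow> snds (\<alpha> j) = rcvs (\<alpha> (Suc j))"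
    using causal_prefixes[of "[b]" \<pi> l] by blast
  define \<gamma> where "\<gamma> j = drop (length (\<alpha> j)) (\<pi> j)" for j
  have split: "\<pi> j = \<alpha> j @ \<gamma> j" for j using \<alpha>1[of j] by (auto simp: prefix_def \<gamma>_def)
  define Cmid where "Cmid = (\<lambda>\<xi>. drop (length (rcvs (\<alpha> (chan_idx \<xi>)))) (stage_input y \<alpha> (chan_idx \<xi>)))"
  have "prefix (rcvs (\<alpha> (Suc j))) (snds (\<alpha> j))" if "Suc j < N" for j
    using \<alpha>3[of j] \<alpha>0[of "Suc j"] by (cases "j < l") auto
  then obtain Smid where reach_mid: "reach (Smid, Cmid)"
    and paths: "\<And>j. j < N - 1 \<Longrightarrow> lts_path (T (node j)) (Smid (node j)) (\<gamma> j) (S (node j))"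
    and Smid_last: "Smid (node (N - 1)) = S (node (N - 1))"
    using staged_prefix[OF D \<alpha>1] unfolding Cmid_def \<gamma>_def by blast
  have "Cmid (chan (N - 1)) = [b]" using N_eq \<alpha>0[of "Suc l"] \<alpha>2 by (simp add: Cmid_def)
  moreover have "b \<in> M (chan (N - 1))" using T_Rcv_msg[OF t] inv_head_node by simp
  ultimately have "step (Smid, Cmid) (Smid(node (N - 1) := q), Cmid(chan (N - 1) := []))"
    using t Smid_last by (intro cfsm_step.recv) auto
  then have "reach (Smid(node (Suc l) := q), beta_only (drop (length (rcvs (\<alpha> 0))) y))"
    using reach_step[OF reach_mid] causal_prefix_chans[of l \<alpha> y, OF N_eq(2) \<alpha>0 \<alpha>3] N_eq
    unfolding Cmid_def by simp
  moreover have "lts_path (T (node j)) ((Smid(node (Suc l) := q)) (node j)) (\<gamma> j) (S (node j))"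
    if "j < Suc l" for j
    using paths[of j] that node_ne[of j "Suc l"] N_eq by simp
  moreover have "w = snds (\<gamma> l)" using split[of l] snl \<alpha>2 by simp
  ultimately show ?thesis
    using staged_restart[OF D N_eq(2) split \<alpha>3, of "Smid(node (Suc l) := q)"] N_eq by auto
qed

lemma staged_step:
  "step X Y \<Longrightarrow> staged S' y \<pi> (fst X) (snd X) \<Longrightarrow> \<exists>S'' y'' \<pi>''. staged S'' y'' \<pi>'' (fst Y) (snd Y)"
proof (induction arbitrary: S' y \<pi> rule: cfsm_step.induct)
  case (send S i b q \<beta>' C)
  have D: "staged S' y \<pi> S C" using send.prems by simp
  define k where "k = node_idx i"
  have k: "k < N" "node k = i" using node_idx unfolding k_def by auto
  have b': "\<beta>' = chan (Suc k)" using send.hyps(3) inv_tail_node[of k] k tail_eq by metis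
  show ?case
  proof (cases "k < N - 1")
    case True
    have "staged S' y (\<pi>(k := \<pi> k @ [Snd b])) (S(node k := q)) (C(chan (Suc k) := C (chan (Suc k)) @ [b]))"
      using staged_send_inner[OF D True] send.hyps(1) k by simp
    then show ?thesis unfolding fst_conv snd_conv k(2)[symmetric] b' by blast
  next
    case False
    then have kN: "k = N - 1" using k by simp
    then have "\<beta>' = \<beta>" using b' chan_N N_pos by simp
    have "staged (S'(node (N - 1) := q)) (y @ [b]) \<pi> (S(node (N - 1) := q)) (C(\<beta> := C \<beta> @ [b]))"
      using staged_send_last[OF D] send.hyps(1) k kN by simp
    then show ?thesis unfolding fst_conv snd_conv k(2)[symmetric] kN \<open>\<beta>' = \<beta>\<close> by blast
  qed
next
  case (recv S i b q \<beta>' C w)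
  have D: "staged S' y \<pi> S C" using recv.prems by simp
  define k where "k = node_idx i"
  have k: "k < N" "node k = i" using node_idx unfolding k_def by auto
  have b': "\<beta>' = chan k" using recv.hyps(3) inv_head_node[of k] k head_eq by metis
  show ?case
  proof (cases "k < N - 1")
    case True
    have "staged S' y (\<pi>(k := \<pi> k @ [Rcv b])) (S(node k := q)) (C(chan k := w))"
      using staged_recv_inner[OF D True] recv.hyps(1) recv.hyps(4) k b' by simp
    then show ?thesis unfolding fst_conv snd_conv k(2)[symmetric] b' by blast
  next
    case False
    then have kN: "k = N - 1" using k by simp
    show ?thesis
    proof (cases "N = 1")
      case True
      then have "k = 0" "\<beta>' = \<beta>" using kN b' chan_0 by auto
      have "staged (S(node 0 := q)) w \<pi> (S(node 0 := q)) (C(\<beta> := w))"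
        using staged_recv_last_single[OF D True] recv.hyps(1) recv.hyps(4) k \<open>k = 0\<close> \<open>\<beta>' = \<beta>\<close> by simp
      then show ?thesis unfolding fst_conv snd_conv k(2)[symmetric] \<open>k = 0\<close> \<open>\<beta>' = \<beta>\<close> by blast
    next
      case False
      then have N2: "2 \<le> N" using N_pos by simp
      have "\<exists>S'' y'' \<pi>''. staged S'' y'' \<pi>'' (S(node (N - 1) := q)) (C(chan (N - 1) := w))"
        using staged_recv_last[OF D N2] recv.hyps(1) recv.hyps(4) k kN b' by simp
      then show ?thesis unfolding fst_conv snd_conv k(2)[symmetric] b' kN by blast
    qed
  qed
qed

lemma reach_staged: "reach X \<Longrightarrow> \<exists>S' y \<pi>. staged S' y \<pi> (fst X) (snd X)"
proof -
  assume "reach X"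
  then have "step\<^sup>*\<^sup>* (h, \<lambda>\<xi>. []) X" by (simp add: reach_def)
  then show ?thesis
  proof (induction rule: rtranclp_induct)
    case base then show ?case using staged_init by auto
  next
    case (step Y Z)
    then obtain S' y \<pi> where "staged S' y \<pi> (fst Y) (snd Y)" by blast
    then show ?case using staged_step[OF step.hyps(2)] by blast
  qed
qed

lemma stage_chans_0_eq_chan_box:
  "stage_chans S' S 0 = chan_box ((\<lambda>\<xi>. {[]})(\<beta> := Q_set tail head M T h \<beta> S'))"
proof (intro equalityI subsetI)
  fix C assume "C \<in> stage_chans S' S 0"
  then obtain y where y: "C = beta_only y" "reach (S', beta_only y)" by auto
  have "y \<in> Q_set tail head M T h \<beta> S'" unfolding Q_set_def reach_L_eq
    using y by (intro CollectI exI[of _ "beta_only y"]) (auto simp: beta_only_def)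
  then show "C \<in> chan_box ((\<lambda>\<xi>. {[]})(\<beta> := Q_set tail head M T h \<beta> S'))"
    using y by (auto simp: chan_box_def beta_only_def)
next
  fix C assume "C \<in> chan_box ((\<lambda>\<xi>. {[]})(\<beta> := Q_set tail head M T h \<beta> S'))"
  then have C: "C \<zeta> \<in> ((\<lambda>\<xi>. {[]})(\<beta> := Q_set tail head M T h \<beta> S')) \<zeta>" for \<zeta>
    by (simp add: chan_box_def)
  from C[of \<beta>] obtain C0 where C0: "reach (S', C0)" "C \<beta> = C0 \<beta>" "\<forall>\<xi>. \<xi> \<noteq> \<beta> \<longrightarrow> C0 \<xi> = []"
    by (auto simp: Q_set_def reach_L_eq)
  have "C0 = beta_only (C \<beta>)" using C0 by (auto simp: beta_only_def fun_eq_iff)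
  moreover have "C = beta_only (C \<beta>)"
  proof
    fix \<xi>
    show "C \<xi> = beta_only (C \<beta>) \<xi>" using C[of \<xi>] by (cases "\<xi> = \<beta>") (simp_all add: beta_only_def)
  qed
  ultimately show "C \<in> stage_chans S' S 0" using C0(1) by auto
qed

lemma recognizable_stage_chans:
  assumes Q: "\<And>S. composite_state K S \<Longrightarrow> regular (Q_set tail head M T h \<beta> S)"
    and S': "composite_state K S'"
  shows "k \<le> N - 1 \<Longrightarrow> recognizable M (stage_chans S' S k)"
proof (induction k)
  case 0
  have "regular (Q_set tail head M T h \<beta> S')" using Q S' .
  moreover have "Q_set tail head M T h \<beta> S' \<subseteq> lists (M \<beta>)"
  proof
    fix x assume "x \<in> Q_set tail head M T h \<beta> S'"
    then obtain C0 where "reach (S', C0)" "x = C0 \<beta>" by (auto simp: Q_set_def reach_L_eq)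
    then show "x \<in> lists (M \<beta>)" using reach_invariant[of "(S', C0)"] chan_monoid_get by simp
  qed
  ultimately show ?case
    unfolding stage_chans_0_eq_chan_box by (intro recognizable_chan_box) (simp add: reg_finite)
next
  case (Suc k)
  then have k: "k < N - 1" "Suc k < N" by auto
  have "regular (local_runs S' S k)" unfolding local_runs_def
    using S' by (intro regular_lts_path[OF finite_K finite_act_alphabet T_subset]) (simp add: composite_state_def)
  moreover have "snds w \<in> lists (M (chan (Suc k)))" if "w \<in> local_runs S' S k" for w
    using lts_path_snds[of "node k"] that inv_tail_node unfolding local_runs_def by simp
  moreover have "chan k \<noteq> chan (Suc k)" using chan_ne k by simp
  moreover have "recognizable M (stage_chans S' S k)" using Suc.IH k by simp
  ultimately show ?case unfolding stage_chans.simps by (intro recognizable_relay)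
qed

lemma reach_L_eq_stage_chans:
  "reach_L tail head M T h S =
    (\<Union>S'\<in>{S'. composite_state K S' \<and> S' (node (N - 1)) = S (node (N - 1))}. stage_chans S' S (N - 1))"
  (is "_ = (\<Union>S'\<in>?SS. _)")
proof (intro equalityI subsetI)
  fix C assume "C \<in> reach_L tail head M T h S"
  then have "reach (S, C)" by (simp add: reach_L_eq)
  then obtain S' y \<pi> where D: "staged S' y \<pi> S C" using reach_staged by fastforce
  have "composite_state K S'"
    using reach_invariant[of "(S', beta_only y)"] stagedD(1)[OF D] by (simp add: composite_state_def)
  then have "S' \<in> ?SS" using stagedD(4)[OF D] by simp
  moreover have "C \<in> stage_chans S' S (N - 1)" by (rule staged_stage_chans[OF D])
  ultimately show "C \<in> (\<Union>S'\<in>?SS. stage_chans S' S (N - 1))" by blast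
next
  fix C assume "C \<in> (\<Union>S'\<in>?SS. stage_chans S' S (N - 1))"
  then obtain S' where "S' \<in> ?SS" "C \<in> stage_chans S' S (N - 1)" by blast
  then have "reach (S, C)" using stage_chans_reach_full by simp
  then show "C \<in> reach_L tail head M T h S" by (simp add: reach_L_eq)
qed

theorem recognizable_reach_L:
  assumes "\<And>S. composite_state K S \<Longrightarrow> regular (Q_set tail head M T h \<beta> S)"
  shows "recognizable M (reach_L tail head M T h S)"
proof -
  let ?SS = "{S'. composite_state K S' \<and> S' (node (N - 1)) = S (node (N - 1))}"
  have "?SS \<subseteq> Pi\<^sub>E UNIV K" by (auto simp: composite_state_def PiE_UNIV_domain)
  moreover have "finite (Pi\<^sub>E UNIV K)" by (rule finite_PiE) (auto simp: finite_K)
  ultimately have "finite ((\<lambda>S'. stage_chans S' S (N - 1)) ` ?SS)" by (simp add: finite_subset)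
  moreover have "recognizable M A" if "A \<in> (\<lambda>S'. stage_chans S' S (N - 1)) ` ?SS" for A
    using that recognizable_stage_chans[OF assms] by auto
  ultimately show ?thesis unfolding reach_L_eq_stage_chans by (rule recognizable_Union)
qed

end

theorem theorem8p3:
  fixes tail head :: "'e::finite \<Rightarrow> 'n::finite"
    and M :: "'e \<Rightarrow> 'm set"
    and K :: "'n \<Rightarrow> 's set"
    and T :: "'n \<Rightarrow> ('s \<times> 'm act \<times> 's) set"
    and h :: "'n \<Rightarrow> 's"
  assumes "cfsm_protocol tail head M K T h"
    and "cyclic_graph tail head"
  shows "(recognizable_channel_property tail head M K T h
            \<longleftrightarrow> rational_channel_property tail head M K T h)
       \<and> (rational_channel_property tail head M K T h
            \<longleftrightarrow> (\<forall>\<beta> S. composite_state K S \<longrightarrow> regular (Q_set tail head M T h \<beta> S)))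
       \<and> ((\<forall>\<beta> S. composite_state K S \<longrightarrow> regular (Q_set tail head M T h \<beta> S))
            \<longleftrightarrow> (\<exists>\<beta>. \<forall>S. composite_state K S \<longrightarrow> regular (Q_set tail head M T h \<beta> S)))"
proof -
  let ?a = "recognizable_channel_property tail head M K T h"
  let ?b = "rational_channel_property tail head M K T h"
  let ?c = "\<forall>\<beta> S. composite_state K S \<longrightarrow> regular (Q_set tail head M T h \<beta> S)"
  let ?d = "\<exists>\<beta>. \<forall>S. composite_state K S \<longrightarrow> regular (Q_set tail head M T h \<beta> S)"
  have "?a \<Longrightarrow> ?b"
    unfolding recognizable_channel_property_def rational_channel_property_def
    by (simp add: rational_if_recognizable)
  moreover have "?b \<Longrightarrow> ?c"
    unfolding rational_channel_property_def Q_set_eq_channel_section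
    by (simp add: regular_channel_section[of M])
  moreover have "?c \<Longrightarrow> ?d" by simp
  moreover have "?d \<Longrightarrow> ?a"
  proof -
    assume ?d
    then obtain \<beta> where Q: "\<And>S. composite_state K S \<Longrightarrow> regular (Q_set tail head M T h \<beta> S)"
      by blast
    interpret cyclic_protocol tail head M K T h \<beta> using assms by unfold_locales
    show ?a unfolding recognizable_channel_property_def using recognizable_reach_L[OF Q] by simp
  qed
  ultimately show ?thesis by blast
qed

end
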